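(* Fix $\lambda\in[0,1)$, $p\in[0,1]$, $T>0$, and consider the coupled construction below. Let $\mathcal{C}$ be the set of $\omega$ with $\lim_{N\to\infty}\sup_{t\in[0,T]}|W^N(\omega,t)-(1+\lambda)t|=0$ and $\lim_{N\to\infty}\frac1N\sum_{k=1}^N\mathbb{I}_{[a,b)}(U(\omega,k))=b-a$ for all $[a,b)\subset[0,1]$, $a<b$. Assume there is $\mathbf{v}^0\in\overline{\mathcal{V}}^\infty$ with $\|\mathbf{V}^N(\omega,0)-\mathbf{v}^0\|_w\to0$ for all $\omega\in\mathcal{C}$. Fix $\omega\in\mathcal{C}$ and let $\mathbf{x}=(\mathbf{v},\mathbf{a},\mathbf{l},\mathbf{c})$ be a coordinate-wise Lipschitz continuous function on $[0,T]$ that is the limit (each component in $d^{\mathbb{Z}_+}$) of some subsequence of $(\mathbf{X}^N(\omega,\cdot))_N$. Let $t$ be a point at which all coordinates of $\mathbf{x}$ are differentiable. Then for all $i\ge1$, $\dot{\mathbf{a}}_i(t)=\lambda(\mathbf{v}_{i-1}(t)-\mathbf{v}_i(t))$, $\dot{\mathbf{l}}_i(t)=(1-p)(\mathbf{v}_i(t)-\mathbf{v}_{i+1}(t))$, $\dot{\mathbf{c}}_i(t)=g_i(\mathbf{v}(t))$, with $\mathbf{v}(0)=\mathbf{v}^0$ and $\mathbf{v}_0(s)-\mathbf{v}_1(s)=1$ for all $s\in[0,T]$. In other words, all such limits $\mathbf{v}$ satisfy the fluid model equations.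
   Context: $\mathcal{S}=\{\mathbf{s}\in[0,1]^{\mathbb{Z}_+}:1=\mathbf{s}_0\ge\mathbf{s}_1\ge\cdots\ge0\}$, $\overline{\mathcal{S}}^\infty=\{\mathbf{s}\in\mathcal{S}:\sum_{i\ge1}\mathbf{s}_i<\infty\}$, $\overline{\mathcal{V}}^\infty=\{\mathbf{v}:\mathbf{v}_i=\sum_{j\ge i}\mathbf{s}_j\ \forall i,\text{ for some }\mathbf{s}\in\overline{\mathcal{S}}^\infty\}$; $\|\mathbf{x}\|_w^2=\sum_{i\ge0}2^{-i}\mathbf{x}_i^2$; $d^{\mathbb{Z}_+}(\mathbf{x},\mathbf{y})=\sup_{t\in[0,T]}\|\mathbf{x}(t)-\mathbf{y}(t)\|_w$. $g_i(\mathbf{v})=p$ if $\mathbf{v}_i>0$, $=\min\{\lambda\mathbf{v}_{i-1},p\}$ if $\mathbf{v}_i=0<\mathbf{v}_{i-1}$, $=0$ if $\mathbf{v}_i=\mathbf{v}_{i-1}=0$. Coupled construction: $W$ a Poisson process of rate $1+\lambda$ on $\Omega_W$; $U(k)$, $k\ge1$, i.i.d. uniform on $[0,1]$ on $\Omega_U$; initial states $\mathbf{V}^{(0,N)}\in\overline{\mathcal{V}}^\infty$ with coordinates in $\frac1N\mathbb{Z}_+$ on $\Omega_0$; $\Omega$ the product. $W^N(t)=W(Nt)/N$, $t_k$ its $k$-th jump time. $\mathbf{V}^N(0)=\mathbf{V}^{(0,N)}$; $\mathbf{A}^N_i,\mathbf{L}^N_i,\mathbf{C}^N_i$ ($i\ge1$)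 start at 0, constant between jumps; at $t_k$: $\mathbf{A}^N_i\mathrel{+}=1/N$ for each $i\ge1$ with $U(k)\in\frac{\lambda}{1+\lambda}[0,\mathbf{V}^N_{i-1}(t_k-)-\mathbf{V}^N_i(t_k-))$; $\mathbf{L}^N_i\mathrel{+}=1/N$ for each $i\ge1$ with $U(k)\in\frac{\lambda}{1+\lambda}+\frac{1-p}{1+\lambda}[0,\mathbf{V}^N_i(t_k-)-\mathbf{V}^N_{i+1}(t_k-))$; if $U(k)\in[1-\frac{p}{1+\lambda},1)$, $\mathbf{C}^N_j\mathrel{+}=1/N$ for all $1\le j\le\sup\{i:\mathbf{V}^N_i(t_k-)>0\}$. $\mathbf{V}^N_i=\mathbf{V}^N_i(0)+\mathbf{A}^N_i-\mathbf{L}^N_i-\mathbf{C}^N_i$ ($i\ge1$), $\mathbf{V}^N_0=\mathbf{V}^N_1+1$; $\mathbf{X}^N=(\mathbf{V}^N,\mathbf{A}^N,\mathbf{L}^N,\mathbf{C}^N)$. *)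

theory Defs
  imports "HOL-Analysis.Analysis"
begin

definition S_set :: "(nat \<Rightarrow> real) set" where
  "S_set = {s. (\<forall>i. 0 \<le> s i \<and> s i \<le> 1) \<and> s 0 = 1 \<and> (\<forall>i. s (Suc i) \<le> s i)}"

definition Sbar_inf :: "(nat \<Rightarrow> real) set" where
  "Sbar_inf = {s \<in> S_set. summable (\<lambda>i. s (Suc i))}"

definition Vbar_inf :: "(nat \<Rightarrow> real) set" where
  "Vbar_inf = {v. \<exists>s \<in> Sbar_inf. \<forall>i. v i = (\<Sum>j. s (j + i))}"

definition wnorm :: "(nat \<Rightarrow> real) \<Rightarrow> ennreal" where
  "wnorm x = (if summable (\<lambda>i. (1/2)^i * (x i)^2)
              then ennreal (sqrt (\<Sum>i. (1/2)^i * (x i)^2)) else \<infinity>)"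

definition dZ :: "real \<Rightarrow> (real \<Rightarrow> nat \<Rightarrow> real) \<Rightarrow> (real \<Rightarrow> nat \<Rightarrow> real) \<Rightarrow> ennreal" where
  "dZ T x y = (SUP t\<in>{0..T}. wnorm (\<lambda>i. x t i - y t i))"

definition g_fun :: "real \<Rightarrow> real \<Rightarrow> (nat \<Rightarrow> real) \<Rightarrow> nat \<Rightarrow> real" where
  "g_fun lam p v i =
     (if v i > 0 then p
      else if v i = 0 \<and> 0 < v (i - 1) then min (lam * v (i - 1)) p
      else if v i = 0 \<and> v (i - 1) = 0 then 0
      else undefined)"

type_synonym counters = "(nat \<Rightarrow> real) \<times> (nat \<Rightarrow> real) \<times> (nat \<Rightarrow> real)"

definition V_of :: "(nat \<Rightarrow> real) \<Rightarrow> counters \<Rightarrow> nat \<Rightarrow> real" where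
  "V_of V0 st i =
     (case st of (A, L, C) \<Rightarrow>
        if i = 0 then V0 1 + A 1 - L 1 - C 1 + 1 else V0 i + A i - L i - C i)"

text \<open>Update at a jump time with uniform variable u; V is the pre-jump state V(t_k-).
  c + d*[0,x) is written as the image of [0,x) under y |-> c + d*y.
  "1 <= j <= sup {i. V_i > 0}" is written as "1 <= j and exists i >= j with V_i > 0"
  (which also covers an infinite supremum).\<close>
definition step :: "real \<Rightarrow> real \<Rightarrow> nat \<Rightarrow> (nat \<Rightarrow> real) \<Rightarrow> real \<Rightarrow> counters \<Rightarrow> counters" where
  "step lam p N V0 u st =
     (case st of (A, L, C) \<Rightarrow>
       let V = V_of V0 st in
       ((\<lambda>i. A i + (if 1 \<le> i \<and> u \<in> (\<lambda>y. lam / (1 + lam) * y) ` {0..<V (i - 1) - V i}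
                     then 1 / real N else 0)),
        (\<lambda>i. L i + (if 1 \<le> i \<and> u \<in> (\<lambda>y. lam / (1 + lam) + (1 - p) / (1 + lam) * y) ` {0..<V i - V (i + 1)}
                     then 1 / real N else 0)),
        (\<lambda>i. C i + (if 1 \<le> i \<and> u \<in> {1 - p / (1 + lam)..<1} \<and> (\<exists>j\<ge>i. V j > 0)
                     then 1 / real N else 0))))"

primrec counters_after ::
  "real \<Rightarrow> real \<Rightarrow> nat \<Rightarrow> (nat \<Rightarrow> real) \<Rightarrow> (nat \<Rightarrow> real) \<Rightarrow> nat \<Rightarrow> counters" where
  "counters_after lam p N V0 U 0 = (\<lambda>_. 0, \<lambda>_. 0, \<lambda>_. 0)"
| "counters_after lam p N V0 U (Suc k) =
     step lam p N V0 (U (Suc k)) (counters_after lam p N V0 U k)"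

text \<open>The number of jump times t_k <= t of W^N(t) = W(N t)/N is W(N t).\<close>
definition XV :: "real \<Rightarrow> real \<Rightarrow> (real \<Rightarrow> nat) \<Rightarrow> (nat \<Rightarrow> real) \<Rightarrow> (nat \<Rightarrow> nat \<Rightarrow> real) \<Rightarrow> nat \<Rightarrow> real \<Rightarrow> nat \<Rightarrow> real" where
  "XV lam p W U V0 N t = V_of (V0 N) (counters_after lam p N (V0 N) U (W (real N * t)))"

definition XA :: "real \<Rightarrow> real \<Rightarrow> (real \<Rightarrow> nat) \<Rightarrow> (nat \<Rightarrow> real) \<Rightarrow> (nat \<Rightarrow> nat \<Rightarrow> real) \<Rightarrow> nat \<Rightarrow> real \<Rightarrow> nat \<Rightarrow> real" where
  "XA lam p W U V0 N t = fst (counters_after lam p N (V0 N) U (W (real N * t)))"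

definition XL :: "real \<Rightarrow> real \<Rightarrow> (real \<Rightarrow> nat) \<Rightarrow> (nat \<Rightarrow> real) \<Rightarrow> (nat \<Rightarrow> nat \<Rightarrow> real) \<Rightarrow> nat \<Rightarrow> real \<Rightarrow> nat \<Rightarrow> real" where
  "XL lam p W U V0 N t = fst (snd (counters_after lam p N (V0 N) U (W (real N * t))))"

definition XC :: "real \<Rightarrow> real \<Rightarrow> (real \<Rightarrow> nat) \<Rightarrow> (nat \<Rightarrow> real) \<Rightarrow> (nat \<Rightarrow> nat \<Rightarrow> real) \<Rightarrow> nat \<Rightarrow> real \<Rightarrow> nat \<Rightarrow> real" where
  "XC lam p W U V0 N t = snd (snd (counters_after lam p N (V0 N) U (W (real N * t))))"

text \<open>Sample path of a Poisson (counting) process: starts at 0, nondecreasing,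
  right-continuous, unit jumps.\<close>
definition counting_path :: "(real \<Rightarrow> nat) \<Rightarrow> bool" where
  "counting_path W \<longleftrightarrow> W 0 = 0 \<and> mono_on {0..} W
     \<and> (\<forall>s\<ge>0. ((\<lambda>r. real (W r)) \<longlongrightarrow> real (W s)) (at_right s))
     \<and> (\<forall>s>0. \<exists>\<delta>>0. \<forall>r. s - \<delta> < r \<and> r < s \<longrightarrow> W s \<le> W r + 1)"

end

theory Submission
  imports Defs
begin

text \<open>During \<open>[t, t+h]\<close> there are about \<open>N(1+\<lambda>)h\<close> jumps
  and \<open>V\<close> moves by \<open>O(h)\<close>, so the law of large numbers for the uniform variables gives the
  increments \<open>\<lambda>(v\<^sub>i\<^sub>-\<^sub>1 - v\<^sub>i)h\<close>, \<open>(1-p)(v\<^sub>i - v\<^sub>i\<^sub>+\<^sub>1)h\<close> and (at most) \<open>ph\<close> of \<open>a\<^sub>i\<close>, \<open>l\<^sub>i\<close>, \<open>c\<^sub>i\<close>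
  up to \<open>O(h\<^sup>2)\<close>, which determines the derivatives at \<open>t\<close>. That \<open>v\<close> is nonnegative,
  nonincreasing and has steps at most \<open>1\<close> follows from a discrete invariant of the chain that
  can only be broken at the rare jumps whose uniform variable hits a threshold. Where
  \<open>v\<^sub>i(t) = 0\<close>, the coordinate \<open>v\<^sub>i\<close> is minimal at \<open>t\<close>, so \<open>c\<^sub>i' = a\<^sub>i' - l\<^sub>i' = \<lambda> v\<^sub>i\<^sub>-\<^sub>1(t)\<close>,
  and this is at most \<open>p\<close>.\<close>

section \<open>One jump of the construction\<close>

definition arrival_at :: "real \<Rightarrow> (nat \<Rightarrow> real) \<Rightarrow> real \<Rightarrow> nat \<Rightarrow> bool" where
  "arrival_at lam V u j \<longleftrightarrow> 1 \<le> j \<and> u \<in> (\<lambda>y. lam / (1 + lam) * y) ` {0..<V (j - 1) - V j}"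

definition departure_at :: "real \<Rightarrow> real \<Rightarrow> (nat \<Rightarrow> real) \<Rightarrow> real \<Rightarrow> nat \<Rightarrow> bool" where
  "departure_at lam p V u j \<longleftrightarrow>
     1 \<le> j \<and> u \<in> (\<lambda>y. lam / (1 + lam) + (1 - p) / (1 + lam) * y) ` {0..<V j - V (j + 1)}"

definition cleaning_at :: "real \<Rightarrow> real \<Rightarrow> (nat \<Rightarrow> real) \<Rightarrow> real \<Rightarrow> nat \<Rightarrow> bool" where
  "cleaning_at lam p V u j \<longleftrightarrow> 1 \<le> j \<and> u \<in> {1 - p / (1 + lam)..<1} \<and> (\<exists>m\<ge>j. V m > 0)"

lemma step_unfold:
  "step lam p N V0 u st =
    (case st of (A, L, C) \<Rightarrow>
      ((\<lambda>i. A i + of_bool (arrival_at lam (V_of V0 st) u i) / real N),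
       (\<lambda>i. L i + of_bool (departure_at lam p (V_of V0 st) u i) / real N),
       (\<lambda>i. C i + of_bool (cleaning_at lam p (V_of V0 st) u i) / real N)))"
  by (cases st) (simp add: step_def arrival_at_def departure_at_def cleaning_at_def Let_def fun_eq_iff)

lemma V_of_0: "V_of V0 st 0 = V_of V0 st 1 + 1"
  by (cases st) (simp add: V_of_def)

lemma V_of_step:
  assumes "1 \<le> j"
  shows "V_of V0 (step lam p N V0 u st) j = V_of V0 st j
    + of_bool (arrival_at lam (V_of V0 st) u j) / real N
    - of_bool (departure_at lam p (V_of V0 st) u j) / real N
    - of_bool (cleaning_at lam p (V_of V0 st) u j) / real N"
  using assms by (cases st) (simp add: step_unfold V_of_def)

abbreviation V_after :: "real \<Rightarrow> real \<Rightarrow> nat \<Rightarrow> (nat \<Rightarrow> real) \<Rightarrow> (nat \<Rightarrow> real) \<Rightarrow> nat \<Rightarrow> nat \<Rightarrow> real" where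
  "V_after lam p N V0 U k \<equiv> V_of V0 (counters_after lam p N V0 U k)"

lemma counters_after_Suc:
  "fst (counters_after lam p N V0 U (Suc k)) i = fst (counters_after lam p N V0 U k) i
     + of_bool (arrival_at lam (V_after lam p N V0 U k) (U (Suc k)) i) / real N"
  "fst (snd (counters_after lam p N V0 U (Suc k))) i = fst (snd (counters_after lam p N V0 U k)) i
     + of_bool (departure_at lam p (V_after lam p N V0 U k) (U (Suc k)) i) / real N"
  "snd (snd (counters_after lam p N V0 U (Suc k))) i = snd (snd (counters_after lam p N V0 U k)) i
     + of_bool (cleaning_at lam p (V_after lam p N V0 U k) (U (Suc k)) i) / real N"
  by (cases "counters_after lam p N V0 U k"; simp add: step_unfold)+

lemma increments_eq_card:
  fixes X :: "nat \<Rightarrow> real"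
  assumes X: "\<And>k. X (Suc k) = X k + of_bool (P (Suc k)) / real N" and "K0 \<le> K1"
  shows "X K1 - X K0 = real (card {k \<in> {K0<..K1}. P k}) / real N"
  using \<open>K0 \<le> K1\<close>
proof (induction K1 rule: dec_induct)
  case (step K)
  have "{k \<in> {K0<..Suc K}. P k} =
      (if P (Suc K) then insert (Suc K) {k \<in> {K0<..K}. P k} else {k \<in> {K0<..K}. P k})"
    using step.hyps by (auto simp: le_Suc_eq)
  then have "card {k \<in> {K0<..Suc K}. P k} = card {k \<in> {K0<..K}. P k} + of_bool (P (Suc K))"
    by simp
  then show ?case
    using step.IH X[of K] by (simp add: add_divide_distrib algebra_simps)
qed simp

lemma V_of_step_dist: "\<bar>V_of V0 (step lam p N V0 u st) j - V_of V0 st j\<bar> \<le> 2 / real N"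
proof -
  have "\<bar>V_of V0 (step lam p N V0 u st) i - V_of V0 st i\<bar> \<le> 2 / real N" if "1 \<le> i" for i
    using that by (simp add: V_of_step divide_right_mono)
  from this[of "max 1 j"] show ?thesis
    by (cases "j = 0") (simp_all add: V_of_0 max_def)
qed

lemma V_after_dist:
  assumes "K0 \<le> k"
  shows "\<bar>V_after lam p N V0 U k j - V_after lam p N V0 U K0 j\<bar> \<le> 2 * real (k - K0) / real N"
  using assms
proof (induction k rule: dec_induct)
  case (step k)
  have "\<bar>V_after lam p N V0 U (Suc k) j - V_after lam p N V0 U k j\<bar> \<le> 2 / real N"
    using V_of_step_dist by simp
  with step.IH have "\<bar>V_after lam p N V0 U (Suc k) j - V_after lam p N V0 U K0 j\<bar>
      \<le> 2 * real (k - K0) / real N + 2 / real N"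
    by linarith
  also have "\<dots> = 2 * real (Suc k - K0) / real N"
    using step.hyps by (simp add: Suc_diff_le add_divide_distrib[symmetric] algebra_simps)
  finally show ?case .
qed simp

lemma XV_at_0:
  assumes "counting_path W" "V0 N 0 = V0 N 1 + 1"
  shows "XV lam p W U V0 N 0 = V0 N"
  using assms by (auto simp: XV_def V_of_def counting_path_def fun_eq_iff)

lemma of_bool_div_eq: "P \<Longrightarrow> of_bool P / real N = 1 / real N" "\<not> P \<Longrightarrow> of_bool P / real N = 0"
  by simp_all

lemma of_bool_div_bounds: "0 \<le> of_bool P / real N" "of_bool P / real N \<le> 1 / real N"
  by (simp_all add: divide_right_mono)

lemma of_bool_div_mono: "(P \<Longrightarrow> Q) \<Longrightarrow> of_bool P / real N \<le> of_bool Q / real N"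
  by (auto intro: divide_right_mono)

lemma of_bool_div_diff_le: "of_bool P / real N - of_bool Q / real N \<le> of_bool (P \<and> \<not> Q) / real N"
  by (cases P; cases Q) simp_all

section \<open>A discrete invariant of the jump chain\<close>

definition on_grid :: "nat \<Rightarrow> real \<Rightarrow> bool" where
  "on_grid N x \<longleftrightarrow> (\<exists>z::int. x = of_int z / real N)"

lemma on_grid_add: "on_grid N x \<Longrightarrow> on_grid N y \<Longrightarrow> on_grid N (x + y)"
  unfolding on_grid_def by (metis add_divide_distrib of_int_add)

lemma on_grid_diff: "on_grid N x \<Longrightarrow> on_grid N y \<Longrightarrow> on_grid N (x - y)"
  unfolding on_grid_def by (metis diff_divide_distrib of_int_diff)

lemma on_grid_of_nat: "on_grid N (real m / real N)"
  unfolding on_grid_def by (rule exI[of _ "int m"]) simp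

lemma on_grid_uminus: "on_grid N x \<Longrightarrow> on_grid N (- x)"
  using on_grid_diff[OF on_grid_of_nat[of N 0]] by simp

lemma on_grid_of_bool: "on_grid N (of_bool P / real N)"
  using on_grid_of_nat[of N "of_bool P"] by simp

lemma on_grid_1: "0 < N \<Longrightarrow> on_grid N 1"
  using on_grid_of_nat[of N N] by simp

lemma on_grid_less_imp_le:
  assumes "0 < N" "on_grid N x" "on_grid N y" "x < y"
  shows "x + 1 / real N \<le> y"
proof -
  obtain z1 z2 :: int where z: "x = z1 / real N" "y = z2 / real N"
    using assms(2,3) unfolding on_grid_def by blast
  with assms(1,4) have "z1 + 1 \<le> z2"
    by (simp add: divide_strict_right_mono_neg divide_less_cancel)
  then have "(of_int z1 + 1) / real N \<le> of_int z2 / real N"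
    by (intro divide_right_mono) linarith+
  with z show ?thesis by (simp add: add_divide_distrib)
qed

text \<open>On the grid \<open>\<int>/N\<close> a strict
  inequality between states leaves room for a jump of size \<open>1/N\<close>, which is what makes this
  invariant.\<close>

definition near_monotone :: "real \<Rightarrow> (nat \<Rightarrow> real) \<Rightarrow> bool" where
  "near_monotone D V \<longleftrightarrow> (\<forall>j\<ge>1. - D \<le> V j) \<and> (\<forall>j m. 1 \<le> j \<longrightarrow> j \<le> m \<longrightarrow> V m - V j \<le> D)"

definition unit_steps :: "(nat \<Rightarrow> real) \<Rightarrow> bool" where
  "unit_steps V \<longleftrightarrow> (\<forall>j. V j - V (Suc j) \<le> 1)"

definition approx_profile :: "nat \<Rightarrow> real \<Rightarrow> (nat \<Rightarrow> real) \<Rightarrow> bool" where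
  "approx_profile N D V \<longleftrightarrow>
     V 0 = V 1 + 1 \<and> (\<forall>j. on_grid N (V j)) \<and> near_monotone D V \<and> unit_steps V"

lemma approx_profileD:
  assumes "approx_profile N D V"
  shows "V 0 = V 1 + 1" "on_grid N (V j)" "1 \<le> j \<Longrightarrow> - D \<le> V j"
    "1 \<le> j \<Longrightarrow> j \<le> m \<Longrightarrow> V m - V j \<le> D" "V j - V (Suc j) \<le> 1"
  using assms by (auto simp: approx_profile_def near_monotone_def unit_steps_def)

lemma approx_profile_diff_on_grid: "approx_profile N D V \<Longrightarrow> on_grid N (V i - V j)"
  by (intro on_grid_diff approx_profileD(2))

lemma approx_profile_step_intro:
  assumes V: "approx_profile N D V" and "0 < N" and V'0: "V' 0 = V' 1 + 1"
    and grid: "\<And>j. 1 \<le> j \<Longrightarrow> on_grid N (V' j - V j)"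
    and "near_monotone D' V'" "unit_steps V'"
  shows "approx_profile N D' V'"
proof -
  have "on_grid N (V' j)" if "1 \<le> j" for j
    using on_grid_add[OF approx_profileD(2)[OF V, of j] grid[OF that]] by simp
  moreover have "on_grid N (V' 0)"
    using V'0 on_grid_add[OF calculation[of 1] on_grid_1[OF \<open>0 < N\<close>]] by simp
  ultimately have "\<forall>j. on_grid N (V' j)"
    by (metis less_one not_less)
  with assms show ?thesis
    unfolding approx_profile_def by blast
qed

lemma arrival_step_near_monotone:
  assumes V: "approx_profile N D V" "on_grid N D" "0 < N"
    and V': "\<And>j. 1 \<le> j \<Longrightarrow> V' j = V j + of_bool (w < V (j - 1) - V j) / real N"
  shows "near_monotone D V'"
  unfolding near_monotone_def
proof (intro conjI allI impI)
  fix j :: nat assume j: "1 \<le> j"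
  have "0 \<le> of_bool (w < V (j - 1) - V j) / real N"
    by simp
  then show "- D \<le> V' j"
    using approx_profileD(3)[OF V(1) j] V'[OF j] by linarith
next
  fix j m :: nat assume j: "1 \<le> j" "j \<le> m"
  show "V' m - V' j \<le> D"
  proof (cases "w < V (m - 1) - V m \<and> \<not> w < V (j - 1) - V j")
    case False
    then have "of_bool (w < V (m - 1) - V m) / real N \<le> of_bool (w < V (j - 1) - V j) / real N"
      by (intro of_bool_div_mono) blast
    then show ?thesis
      using approx_profileD(4)[OF V(1) j] V'[of m] V'[of j] j by simp
  next
    case True
    have "j \<noteq> 1"
      using True approx_profileD(1)[OF V(1)] approx_profileD(5)[OF V(1), of "m - 1"] j by auto
    then have "V (m - 1) - V (j - 1) \<le> D"
      using approx_profileD(4)[OF V(1), of "j - 1" "m - 1"] j by simp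
    with True have "V m - V j < D"
      by linarith
    then have "V m - V j + 1 / real N \<le> D"
      by (rule on_grid_less_imp_le[OF V(3) approx_profile_diff_on_grid[OF V(1)] V(2)])
    with True j show ?thesis
      by (simp add: V')
  qed
qed

lemma arrival_step_unit_steps:
  assumes V: "approx_profile N D V" "0 < N" and V'0: "V' 0 = V' 1 + 1"
    and V': "\<And>j. 1 \<le> j \<Longrightarrow> V' j = V j + of_bool (w < V (j - 1) - V j) / real N"
  shows "unit_steps V'"
  unfolding unit_steps_def
proof
  fix j :: nat
  show "V' j - V' (Suc j) \<le> 1"
  proof (cases "j = 0")
    case False
    then have j: "1 \<le> j"
      by simp
    show ?thesis
    proof (cases "w < V (j - 1) - V j \<and> \<not> w < V j - V (Suc j)")
      case True
      then have "V j - V (Suc j) < 1"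
        using approx_profileD(5)[OF V(1), of "j - 1"] j by simp
      then have "V j - V (Suc j) + 1 / real N \<le> 1"
        by (rule on_grid_less_imp_le[OF V(2) approx_profile_diff_on_grid[OF V(1)] on_grid_1[OF V(2)]])
      with True j show ?thesis
        by (simp add: V')
    next
      case False
      then have "of_bool (w < V (j - 1) - V j) / real N \<le> of_bool (w < V j - V (Suc j)) / real N"
        by (intro of_bool_div_mono) blast
      then show ?thesis
        using approx_profileD(5)[OF V(1), of j] V'[OF j] V'[of "Suc j"] by simp
    qed
  qed (simp add: V'0)
qed

lemma departure_step_near_monotone:
  assumes V: "approx_profile N D V" "on_grid N D" "0 < N" and "0 \<le> w"
    and V': "\<And>j. 1 \<le> j \<Longrightarrow> V' j = V j - of_bool (w < V j - V (Suc j)) / real N"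
  shows "near_monotone D V'"
  unfolding near_monotone_def
proof (intro conjI allI impI)
  fix j :: nat assume j: "1 \<le> j"
  show "- D \<le> V' j"
  proof (cases "w < V j - V (Suc j)")
    case True
    with \<open>0 \<le> w\<close> have "V (Suc j) < V j"
      by linarith
    then have "V (Suc j) + 1 / real N \<le> V j"
      by (rule on_grid_less_imp_le[OF V(3) approx_profileD(2)[OF V(1)] approx_profileD(2)[OF V(1)]])
    with True j show ?thesis
      using approx_profileD(3)[OF V(1), of "Suc j"] by (simp add: V')
  qed (use approx_profileD(3)[OF V(1) j] V'[OF j] in simp)
next
  fix j m :: nat assume j: "1 \<le> j" "j \<le> m"
  show "V' m - V' j \<le> D"
  proof (cases "w < V j - V (Suc j) \<and> \<not> w < V m - V (Suc m)")
    case True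
    then have "V m - V j < D"
      using approx_profileD(4)[OF V(1), of "Suc j" "Suc m"] j by simp
    then have "V m - V j + 1 / real N \<le> D"
      by (rule on_grid_less_imp_le[OF V(3) approx_profile_diff_on_grid[OF V(1)] V(2)])
    with True j show ?thesis
      by (simp add: V')
  next
    case False
    then have "of_bool (w < V j - V (Suc j)) / real N \<le> of_bool (w < V m - V (Suc m)) / real N"
      by (intro of_bool_div_mono) blast
    then show ?thesis
      using approx_profileD(4)[OF V(1) j] V'[of m] V'[of j] j by simp
  qed
qed

lemma departure_step_unit_steps:
  assumes V: "approx_profile N D V" "0 < N" and V'0: "V' 0 = V' 1 + 1"
    and V': "\<And>j. 1 \<le> j \<Longrightarrow> V' j = V j - of_bool (w < V j - V (Suc j)) / real N"
  shows "unit_steps V'"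
  unfolding unit_steps_def
proof
  fix j :: nat
  show "V' j - V' (Suc j) \<le> 1"
  proof (cases "j = 0")
    case False
    then have j: "1 \<le> j"
      by simp
    show ?thesis
    proof (cases "w < V (Suc j) - V (Suc (Suc j)) \<and> \<not> w < V j - V (Suc j)")
      case True
      then have "V j - V (Suc j) < 1"
        using approx_profileD(5)[OF V(1), of "Suc j"] by simp
      then have "V j - V (Suc j) + 1 / real N \<le> 1"
        by (rule on_grid_less_imp_le[OF V(2) approx_profile_diff_on_grid[OF V(1)] on_grid_1[OF V(2)]])
      with True j show ?thesis
        by (simp add: V')
    next
      case False
      then have "of_bool (w < V (Suc j) - V (Suc (Suc j))) / real N \<le> of_bool (w < V j - V (Suc j)) / real N"
        by (intro of_bool_div_mono) blast
      then show ?thesis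
        using approx_profileD(5)[OF V(1), of j] V'[OF j] V'[of "Suc j"] by simp
    qed
  qed (simp add: V'0)
qed

lemma cleaning_step_near_monotone:
  assumes V: "approx_profile N D V" "on_grid N D" "0 < N"
    and V': "\<And>j. 1 \<le> j \<Longrightarrow> V' j = V j - of_bool (\<exists>m\<ge>j. V m > 0) / real N"
  shows "near_monotone D V'"
  unfolding near_monotone_def
proof (intro conjI allI impI)
  fix j :: nat assume j: "1 \<le> j"
  show "- D \<le> V' j"
  proof (cases "\<exists>m\<ge>j. V m > 0")
    case True
    then obtain m where "j \<le> m" "0 < V m"
      by blast
    then have "- D < V j"
      using approx_profileD(4)[OF V(1) j, of m] by linarith
    moreover have "on_grid N (- D)"
      using V(2) by (rule on_grid_uminus)
    ultimately have "- D + 1 / real N \<le> V j"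
      using on_grid_less_imp_le[OF V(3) _ approx_profileD(2)[OF V(1)]] by blast
    with True j show ?thesis
      by (simp add: V')
  next
    case False
    then have "of_bool (\<exists>m\<ge>j. V m > 0) / real N = 0"
      by (rule of_bool_div_eq(2))
    then show ?thesis
      using approx_profileD(3)[OF V(1) j] V'[OF j] by linarith
  qed
next
  fix j m :: nat assume j: "1 \<le> j" "j \<le> m"
  show "V' m - V' j \<le> D"
  proof (cases "(\<exists>k\<ge>j. V k > 0) \<and> \<not> (\<exists>k\<ge>m. V k > 0)")
    case True
    then obtain k where "j \<le> k" "0 < V k" "V m \<le> 0"
      by auto
    then have "V m - V j < D"
      using approx_profileD(4)[OF V(1) j(1), of k] by linarith
    then have "V m - V j + 1 / real N \<le> D"
      by (rule on_grid_less_imp_le[OF V(3) approx_profile_diff_on_grid[OF V(1)] V(2)])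
    with True j show ?thesis
      using V'[of m] V'[of j] of_bool_div_eq[of "\<exists>k\<ge>j. V k > 0" N] of_bool_div_eq[of "\<exists>k\<ge>m. V k > 0" N]
      by auto
  next
    case False
    then have "of_bool (\<exists>k\<ge>j. V k > 0) / real N \<le> of_bool (\<exists>k\<ge>m. V k > 0) / real N"
      by (intro of_bool_div_mono) blast
    then show ?thesis
      using approx_profileD(4)[OF V(1) j] V'[of m] V'[of j] j by simp
  qed
qed

lemma cleaning_step_unit_steps:
  assumes V: "approx_profile N D V" and V'0: "V' 0 = V' 1 + 1"
    and V': "\<And>j. 1 \<le> j \<Longrightarrow> V' j = V j - of_bool (\<exists>m\<ge>j. V m > 0) / real N"
  shows "unit_steps V'"
  unfolding unit_steps_def
proof
  fix j :: nat
  show "V' j - V' (Suc j) \<le> 1"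
  proof (cases "j = 0")
    case False
    have "of_bool (\<exists>m\<ge>Suc j. V m > 0) / real N \<le> of_bool (\<exists>m\<ge>j. V m > 0) / real N"
      by (intro of_bool_div_mono) (blast dest: Suc_leD)
    with False show ?thesis
      using approx_profileD(5)[OF V, of j] V'[of j] V'[of "Suc j"] by simp
  qed (simp add: V'0)
qed

lemma affine_image_iff:
  fixes a e d u :: real
  assumes "0 < e"
  shows "u \<in> (\<lambda>y. a + e * y) ` {0..<d} \<longleftrightarrow> a \<le> u \<and> (u - a) / e < d"
proof
  assume "u \<in> (\<lambda>y. a + e * y) ` {0..<d}"
  then obtain y where "0 \<le> y" "y < d" "u = a + e * y"
    by auto
  with assms show "a \<le> u \<and> (u - a) / e < d"
    by simp
next
  assume "a \<le> u \<and> (u - a) / e < d"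
  moreover have "u = a + e * ((u - a) / e)"
    using assms by simp
  ultimately show "u \<in> (\<lambda>y. a + e * y) ` {0..<d}"
    using assms by (intro rev_image_eqI[of "(u - a) / e"]) auto
qed

lemma jump_thresholds:
  fixes lam p :: real
  assumes "0 \<le> lam"
  shows "lam / (1 + lam) + (1 - p) / (1 + lam) = 1 - p / (1 + lam)"
proof -
  have "lam / (1 + lam) + (1 - p) / (1 + lam) = (lam + (1 - p)) / (1 + lam)"
    by (rule add_divide_distrib[symmetric])
  also have "\<dots> = ((1 + lam) - p) / (1 + lam)"
    by (simp add: algebra_simps)
  also have "\<dots> = 1 - p / (1 + lam)"
    using assms by (simp add: diff_divide_distrib)
  finally show ?thesis .
qed

lemma arrival_at_range:
  assumes "unit_steps V" "0 \<le> lam" "arrival_at lam V u j"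
  shows "0 \<le> u \<and> u \<le> lam / (1 + lam)"
proof -
  obtain y where y: "0 \<le> y" "y < V (j - 1) - V j" "u = lam / (1 + lam) * y" and "1 \<le> j"
    using assms(3) unfolding arrival_at_def by auto
  have "V (j - 1) - V (Suc (j - 1)) \<le> 1"
    using assms(1) unfolding unit_steps_def by blast
  with y(2) \<open>1 \<le> j\<close> have "y \<le> 1"
    by simp
  then have "lam / (1 + lam) * y \<le> lam / (1 + lam) * 1"
    using assms(2) by (intro mult_left_mono) simp_all
  with y(1,3) assms(2) show ?thesis
    by simp
qed

lemma departure_at_range:
  assumes "unit_steps V" "0 \<le> lam" "p \<le> 1" "departure_at lam p V u j"
  shows "lam / (1 + lam) \<le> u \<and> (u < 1 - p / (1 + lam) \<or> u = lam / (1 + lam))"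
proof -
  obtain z where z: "0 \<le> z" "z < V j - V (j + 1)" "u = lam / (1 + lam) + (1 - p) / (1 + lam) * z"
    using assms(4) unfolding departure_at_def by auto
  have "V j - V (Suc j) \<le> 1"
    using assms(1) unfolding unit_steps_def by blast
  with z(2) have "z < 1"
    by simp
  have ee: "0 \<le> (1 - p) / (1 + lam)"
    using assms(2,3) by simp
  note jump_thresholds[OF assms(2), of p]
  moreover have "(1 - p) / (1 + lam) * z < (1 - p) / (1 + lam) \<or> (1 - p) / (1 + lam) = 0"
    using \<open>z < 1\<close> ee mult_strict_left_mono[of z 1 "(1 - p) / (1 + lam)"] by linarith
  moreover have "0 \<le> (1 - p) / (1 + lam) * z"
    using ee z(1) by (rule mult_nonneg_nonneg)
  ultimately show ?thesis
    using z(3) by auto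
qed

lemma arrival_at_iff:
  assumes "0 < lam"
  shows "arrival_at lam V u j \<longleftrightarrow> 1 \<le> j \<and> 0 \<le> u \<and> u / (lam / (1 + lam)) < V (j - 1) - V j"
  using affine_image_iff[of "lam / (1 + lam)" u 0] assms unfolding arrival_at_def by simp

lemma departure_at_iff:
  assumes "0 \<le> lam" "p < 1"
  shows "departure_at lam p V u j \<longleftrightarrow>
    1 \<le> j \<and> lam / (1 + lam) \<le> u \<and> (u - lam / (1 + lam)) / ((1 - p) / (1 + lam)) < V j - V (j + 1)"
  using affine_image_iff[of "(1 - p) / (1 + lam)" u "lam / (1 + lam)"] assms
  unfolding departure_at_def by simp

lemma arrival_at_boundary:
  assumes "arrival_at lam V u j" "\<not> arrival_at lam V u (Suc j)"
  shows "V j - V (Suc j) < V (j - 1) - V j"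
proof -
  obtain y where y: "0 \<le> y" "y < V (j - 1) - V j" "u = lam / (1 + lam) * y"
    using assms(1) unfolding arrival_at_def by auto
  have "\<not> y < V j - V (Suc j)"
  proof
    assume "y < V j - V (Suc j)"
    with y have "arrival_at lam V u (Suc j)"
      unfolding arrival_at_def by (intro conjI rev_image_eqI[of y]) simp_all
    with assms(2) show False
      by blast
  qed
  with y(2) show ?thesis
    by linarith
qed

lemma departure_at_boundary:
  assumes "1 \<le> j" "departure_at lam p V u (Suc j)" "\<not> departure_at lam p V u j"
  shows "V j - V (Suc j) < V (Suc j) - V (Suc (Suc j))"
proof -
  obtain z where z: "0 \<le> z" "z < V (Suc j) - V (Suc (Suc j))"
      "u = lam / (1 + lam) + (1 - p) / (1 + lam) * z"
    using assms(2) unfolding departure_at_def by auto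
  have "\<not> z < V j - V (Suc j)"
  proof
    assume "z < V j - V (Suc j)"
    with z assms(1) have "departure_at lam p V u j"
      unfolding departure_at_def by (intro conjI rev_image_eqI[of z]) simp_all
    with assms(3) show False
      by blast
  qed
  with z(2) show ?thesis
    by linarith
qed

lemma cleaning_at_Suc: "cleaning_at lam p V u (Suc j) \<Longrightarrow> 1 \<le> j \<Longrightarrow> cleaning_at lam p V u j"
  unfolding cleaning_at_def by (blast dest: Suc_leD)

lemma arrival_departure_at_imp:
  assumes "unit_steps V" "0 \<le> lam" "p \<le> 1" "arrival_at lam V u j" "departure_at lam p V u k"
  shows "lam = 0 \<and> u = 0"
proof -
  obtain y where y: "0 \<le> y" "y < V (j - 1) - V j" "u = lam / (1 + lam) * y" "1 \<le> j"
    using assms(4) unfolding arrival_at_def by auto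
  have "V (j - 1) - V (Suc (j - 1)) \<le> 1"
    using assms(1) unfolding unit_steps_def by blast
  with y(2,4) have "y < 1"
    by simp
  have "lam / (1 + lam) \<le> u"
    using departure_at_range[OF assms(1-3,5)] by blast
  have "\<not> 0 < lam / (1 + lam)"
  proof
    assume "0 < lam / (1 + lam)"
    from mult_strict_left_mono[OF \<open>y < 1\<close> this] y(3) \<open>lam / (1 + lam) \<le> u\<close>
    show False
      by simp
  qed
  with assms(2) have "lam = 0"
    by (cases "0 < lam") auto
  with y(3) show ?thesis
    by simp
qed

lemma jump_boundary_gap:
  assumes V: "approx_profile N D V" "2 \<le> N" and "0 \<le> lam" "p \<le> 1" "1 \<le> j"
  shows "V j - V (Suc j)
    + of_bool (arrival_at lam V u j \<and> \<not> arrival_at lam V u (Suc j)) / real N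
    + of_bool (departure_at lam p V u (Suc j) \<and> \<not> departure_at lam p V u j) / real N \<le> 1"
    (is "?d + of_bool ?A / real N + of_bool ?B / real N \<le> 1")
proof -
  have N: "0 < N"
    using V(2) by simp
  have us: "unit_steps V"
    using V(1) by (simp add: approx_profile_def)
  note gap = on_grid_less_imp_le[OF N approx_profile_diff_on_grid[OF V(1)] approx_profile_diff_on_grid[OF V(1)]]
  consider "?A" "?B" | "?A" "\<not> ?B" | "\<not> ?A" "?B" | "\<not> ?A" "\<not> ?B"
    by blast
  then show ?thesis
  proof cases
    case 1
    then have "lam = 0" "u = 0"
      using arrival_departure_at_imp[OF us assms(3,4)] by blast+
    moreover have "arrival_at lam V u (Suc j)" if "0 < ?d"
      unfolding arrival_at_def using that \<open>lam = 0\<close> \<open>u = 0\<close>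
      by (intro conjI rev_image_eqI[of 0]) simp_all
    ultimately have "\<not> 0 < ?d"
      using 1 by blast
    moreover have "1 / real N + 1 / real N \<le> 1"
      using V(2) by (simp add: add_divide_distrib[symmetric])
    ultimately show ?thesis
      using 1 of_bool_div_eq(1)[of ?A N] of_bool_div_eq(1)[of ?B N] by linarith
  next
    case 2
    then have "?d < V (j - 1) - V j"
      using arrival_at_boundary by blast
    then have "?d < V (j - 1) - V (Suc (j - 1))"
      using assms(5) by simp
    then have "?d + 1 / real N \<le> V (j - 1) - V (Suc (j - 1))"
      by (rule gap)
    with 2 show ?thesis
      using approx_profileD(5)[OF V(1), of "j - 1"] of_bool_div_eq(1)[of ?A N] of_bool_div_eq(2)[of ?B N]
      by linarith
  next
    case 3
    then have "?d < V (Suc j) - V (Suc (Suc j))"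
      using departure_at_boundary assms(5) by blast
    then have "?d + 1 / real N \<le> V (Suc j) - V (Suc (Suc j))"
      by (rule gap)
    with 3 show ?thesis
      using approx_profileD(5)[OF V(1), of "Suc j"] of_bool_div_eq(2)[of ?A N] of_bool_div_eq(1)[of ?B N]
      by linarith
  next
    case 4
    then show ?thesis
      using approx_profileD(5)[OF V(1), of j] of_bool_div_eq(2)[of ?A N] of_bool_div_eq(2)[of ?B N]
      by linarith
  qed
qed

lemma jump_step_unit_steps:
  assumes V: "approx_profile N D V" "2 \<le> N" and "0 \<le> lam" "p \<le> 1" and V'0: "V' 0 = V' 1 + 1"
    and V': "\<And>j. 1 \<le> j \<Longrightarrow> V' j = V j + of_bool (arrival_at lam V u j) / real N
       - of_bool (departure_at lam p V u j) / real N - of_bool (cleaning_at lam p V u j) / real N"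
  shows "unit_steps V'"
  unfolding unit_steps_def
proof
  fix j :: nat
  show "V' j - V' (Suc j) \<le> 1"
  proof (cases "j = 0")
    case False
    then have j: "1 \<le> j"
      by simp
    have "of_bool (cleaning_at lam p V u (Suc j)) / real N \<le> of_bool (cleaning_at lam p V u j) / real N"
      using cleaning_at_Suc[OF _ j] by (rule of_bool_div_mono)
    then show ?thesis
      using jump_boundary_gap[OF V assms(3,4) j, of u] V'[OF j] V'[of "Suc j"]
        of_bool_div_diff_le[of "arrival_at lam V u j" N "arrival_at lam V u (Suc j)"]
        of_bool_div_diff_le[of "departure_at lam p V u (Suc j)" N "departure_at lam p V u j"]
      by simp
  qed (simp add: V'0)
qed

lemma jump_step_near_monotone:
  assumes "near_monotone D V"
    and V': "\<And>j. 1 \<le> j \<Longrightarrow> V' j = V j + of_bool (arrival_at lam V u j) / real N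
       - of_bool (departure_at lam p V u j) / real N - of_bool (cleaning_at lam p V u j) / real N"
  shows "near_monotone (D + 3 / real N) V'"
  unfolding near_monotone_def
proof (intro conjI allI impI)
  fix j :: nat assume j: "1 \<le> j"
  with assms(1) have "- D \<le> V j"
    unfolding near_monotone_def by blast
  then show "- (D + 3 / real N) \<le> V' j"
    using V'[OF j] of_bool_div_bounds[of "arrival_at lam V u j" N]
      of_bool_div_bounds[of "departure_at lam p V u j" N] of_bool_div_bounds[of "cleaning_at lam p V u j" N]
    by linarith
next
  fix j m :: nat assume j: "1 \<le> j" "j \<le> m"
  with assms(1) have "V m - V j \<le> D"
    unfolding near_monotone_def by blast
  then show "V' m - V' j \<le> D + 3 / real N"
    using V'[OF j(1)] V'[of m] j of_bool_div_bounds[of "arrival_at lam V u m" N]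
      of_bool_div_bounds[of "departure_at lam p V u j" N] of_bool_div_bounds[of "cleaning_at lam p V u j" N]
      of_bool_div_bounds[of "departure_at lam p V u m" N] of_bool_div_bounds[of "cleaning_at lam p V u m" N]
      of_bool_div_bounds[of "arrival_at lam V u j" N]
    by linarith
qed

lemma approx_profile_jump_step:
  assumes V: "approx_profile N D V" "2 \<le> N" and "0 \<le> lam" "p \<le> 1" and V'0: "V' 0 = V' 1 + 1"
    and V': "\<And>j. 1 \<le> j \<Longrightarrow> V' j = V j + of_bool (arrival_at lam V u j) / real N
       - of_bool (departure_at lam p V u j) / real N - of_bool (cleaning_at lam p V u j) / real N"
  shows "approx_profile N (D + 3 / real N) V'"
proof (rule approx_profile_step_intro[OF V(1) _ V'0])
  show "near_monotone (D + 3 / real N) V'"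
    using V(1) jump_step_near_monotone V' unfolding approx_profile_def by blast
  show "unit_steps V'"
    by (rule jump_step_unit_steps[OF V assms(3,4) V'0 V'])
  fix j :: nat assume "1 \<le> j"
  then have "V' j - V j = of_bool (arrival_at lam V u j) / real N
      - of_bool (departure_at lam p V u j) / real N - of_bool (cleaning_at lam p V u j) / real N"
    by (simp add: V')
  then show "on_grid N (V' j - V j)"
    by (simp only: on_grid_diff on_grid_of_bool)
qed (use V(2) in simp)

lemma untied_jump_cases:
  assumes us: "unit_steps V" and lam: "0 \<le> lam" and p: "0 \<le> p" "p \<le> 1"
    and u: "0 \<le> u" "u \<le> 1" "u \<noteq> 0" "u \<noteq> lam / (1 + lam)"
    and V': "\<And>j. 1 \<le> j \<Longrightarrow> V' j = V j + of_bool (arrival_at lam V u j) / real N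
       - of_bool (departure_at lam p V u j) / real N - of_bool (cleaning_at lam p V u j) / real N"
  obtains (arrival) w where "\<And>j. 1 \<le> j \<Longrightarrow> V' j = V j + of_bool (w < V (j - 1) - V j) / real N"
    | (departure) w where "0 \<le> w" "\<And>j. 1 \<le> j \<Longrightarrow> V' j = V j - of_bool (w < V j - V (Suc j)) / real N"
    | (cleaning) "\<And>j. 1 \<le> j \<Longrightarrow> V' j = V j - of_bool (\<exists>m\<ge>j. V m > 0) / real N"
    | (none) "\<And>j. 1 \<le> j \<Longrightarrow> V' j = V j"
proof -
  let ?a = "lam / (1 + lam)" and ?q = "p / (1 + lam)"
  have thr: "?a + (1 - p) / (1 + lam) = 1 - ?q" "0 \<le> (1 - p) / (1 + lam)" "?a < 1" "0 \<le> ?q"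
    using jump_thresholds[OF lam] lam p by simp_all
  have no_arrival: "\<not> arrival_at lam V u j" if "?a < u" for j
    using arrival_at_range[OF us lam] that by fastforce
  have no_departure: "\<not> departure_at lam p V u j" if "u < ?a \<or> 1 - ?q \<le> u" for j
    using departure_at_range[OF us lam p(2)] that u(4) by fastforce
  have no_cleaning: "\<not> cleaning_at lam p V u j" if "u < 1 - ?q \<or> u = 1" for j
    using that by (auto simp: cleaning_at_def)
  consider "u < ?a" | "?a < u" "u < 1 - ?q" | "1 - ?q \<le> u" "u < 1" | "u = 1"
    using u thr by linarith
  then show ?thesis
  proof cases
    case 1
    then have "0 < lam"
      using u(1) lam by (cases "lam = 0") auto
    with 1 u(1) thr show ?thesis
      using V' arrival_at_iff no_departure no_cleaning by (intro arrival[of "u / ?a"]) auto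
  next
    case 2
    then have "0 < (1 - p) / (1 + lam)"
      using thr by linarith
    with 2 lam have "p < 1" "0 \<le> (u - ?a) / ((1 - p) / (1 + lam))"
      by (simp_all add: zero_less_divide_iff)
    with 2 show ?thesis
      using V' departure_at_iff[OF lam] no_arrival no_cleaning
      by (intro departure[of "(u - ?a) / ((1 - p) / (1 + lam))"]) auto
  next
    case 3
    with u(4) thr show ?thesis
      using V' no_arrival no_departure unfolding cleaning_at_def by (intro cleaning) auto
  next
    case 4
    with thr show ?thesis
      using V' no_arrival no_departure no_cleaning by (intro none) simp
  qed
qed

lemma approx_profile_untied_step:
  assumes V: "approx_profile N D V" "on_grid N D" "0 < N" and lam: "0 \<le> lam" and p: "0 \<le> p" "p \<le> 1"
    and u: "0 \<le> u" "u \<le> 1" "u \<noteq> 0" "u \<noteq> lam / (1 + lam)" and V'0: "V' 0 = V' 1 + 1"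
    and V': "\<And>j. 1 \<le> j \<Longrightarrow> V' j = V j + of_bool (arrival_at lam V u j) / real N
       - of_bool (departure_at lam p V u j) / real N - of_bool (cleaning_at lam p V u j) / real N"
  shows "approx_profile N D V'"
proof -
  have us: "unit_steps V"
    using V(1) by (simp add: approx_profile_def)
  note intro = approx_profile_step_intro[OF V(1,3) V'0]
  show ?thesis
  proof (rule untied_jump_cases[OF us lam p u V'])
    fix w assume arrival: "\<And>j. 1 \<le> j \<Longrightarrow> V' j = V j + of_bool (w < V (j - 1) - V j) / real N"
    show ?thesis
      by (rule intro[OF _ arrival_step_near_monotone[OF V arrival] arrival_step_unit_steps[OF V(1,3) V'0 arrival]])
        (simp add: arrival on_grid_of_bool)
  next
    fix w assume departure: "0 \<le> w" "\<And>j. 1 \<le> j \<Longrightarrow> V' j = V j - of_bool (w < V j - V (Suc j)) / real N"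
    show ?thesis
      by (rule intro[OF _ departure_step_near_monotone[OF V departure]
            departure_step_unit_steps[OF V(1,3) V'0 departure(2)]])
        (simp add: departure on_grid_of_bool on_grid_uminus)
  next
    assume cleaning: "\<And>j. 1 \<le> j \<Longrightarrow> V' j = V j - of_bool (\<exists>m\<ge>j. V m > 0) / real N"
    show ?thesis
      by (rule intro[OF _ cleaning_step_near_monotone[OF V cleaning] cleaning_step_unit_steps[OF V(1) V'0 cleaning]])
        (simp add: cleaning on_grid_of_bool on_grid_uminus)
  next
    assume "\<And>j. 1 \<le> j \<Longrightarrow> V' j = V j"
    with V'0 approx_profileD(1)[OF V(1)] have "V' = V"
      by (intro ext) (metis One_nat_def Suc_leI le_refl not_gr0)
    with V(1) show ?thesis
      by simp
  qed
qed

text \<open>Only a uniform variable equal to \<open>0\<close> or to the threshold \<open>\<lambda>/(1+\<lambda>)\<close> can trigger events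
  of two kinds at one jump; these ties are the only jumps that may weaken the invariant.\<close>

definition tie_count :: "real \<Rightarrow> (nat \<Rightarrow> real) \<Rightarrow> nat \<Rightarrow> nat" where
  "tie_count lam U k = card {m \<in> {1..k}. U m = 0 \<or> U m = lam / (1 + lam)}"

lemma tie_count_Suc:
  "tie_count lam U (Suc k) = tie_count lam U k + of_bool (U (Suc k) = 0 \<or> U (Suc k) = lam / (1 + lam))"
proof -
  have "{m \<in> {1..Suc k}. U m = 0 \<or> U m = lam / (1 + lam)} =
      (if U (Suc k) = 0 \<or> U (Suc k) = lam / (1 + lam)
       then insert (Suc k) {m \<in> {1..k}. U m = 0 \<or> U m = lam / (1 + lam)}
       else {m \<in> {1..k}. U m = 0 \<or> U m = lam / (1 + lam)})"
    by (auto simp: le_Suc_eq)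
  then show ?thesis
    unfolding tie_count_def by simp
qed

lemma approx_profile_V_after:
  assumes N: "2 \<le> N" and lam: "0 \<le> lam" and p: "0 \<le> p" "p \<le> 1"
    and U: "\<forall>k\<ge>1. 0 \<le> U k \<and> U k \<le> 1" and V0: "approx_profile N 0 V0"
  shows "approx_profile N (3 * real (tie_count lam U k) / real N) (V_after lam p N V0 U k)"
proof (induction k)
  case 0
  have "V_of V0 (\<lambda>_. 0, \<lambda>_. 0, \<lambda>_. 0) = V0"
    using approx_profileD(1)[OF V0] by (auto simp: V_of_def)
  with V0 show ?case
    by (simp add: tie_count_def)
next
  case (Suc k)
  let ?V = "V_after lam p N V0 U k" and ?u = "U (Suc k)"
  have V'0: "V_after lam p N V0 U (Suc k) 0 = V_after lam p N V0 U (Suc k) 1 + 1"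
    by (rule V_of_0)
  have V': "V_after lam p N V0 U (Suc k) j = ?V j + of_bool (arrival_at lam ?V ?u j) / real N
      - of_bool (departure_at lam p ?V ?u j) / real N - of_bool (cleaning_at lam p ?V ?u j) / real N"
    if "1 \<le> j" for j
    using V_of_step[OF that] by simp
  show ?case
  proof (cases "?u = 0 \<or> ?u = lam / (1 + lam)")
    case True
    with approx_profile_jump_step[OF Suc.IH N lam p(2) V'0 V'] show ?thesis
      by (simp add: tie_count_Suc add_divide_distrib algebra_simps)
  next
    case False
    have "on_grid N (3 * real (tie_count lam U k) / real N)"
      using on_grid_of_nat[of N "3 * tie_count lam U k"] by simp
    with False approx_profile_untied_step[OF Suc.IH _ _ lam p _ _ _ _ V'0 V'] N U show ?thesis
      by (simp add: tie_count_Suc)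
  qed
qed

lemma Vbar_inf_props:
  assumes "V \<in> Vbar_inf"
  shows "V 0 = V 1 + 1" "0 \<le> V i" "V (Suc i) \<le> V i" "V i - V (Suc i) \<le> 1"
proof -
  obtain s where s: "s \<in> Sbar_inf" "\<And>i. V i = (\<Sum>j. s (j + i))"
    using assms unfolding Vbar_inf_def by blast
  have s01: "\<And>i. 0 \<le> s i \<and> s i \<le> 1" "s 0 = 1" and "summable (\<lambda>i. s (Suc i))"
    using s(1) unfolding Sbar_inf_def S_set_def by auto
  then have shift: "summable (\<lambda>j. s (j + i))" for i
    by (metis summable_Suc_iff summable_iff_shift)
  have V_Suc: "V (Suc i) = V i - s i" for i
    using suminf_split_head[OF shift[of i]] s(2)[of i] s(2)[of "Suc i"] by simp
  show "V 0 = V 1 + 1"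
    using V_Suc[of 0] s01(2) by simp
  show "0 \<le> V i"
    unfolding s(2) using shift s01(1) by (simp add: suminf_nonneg)
  show "V (Suc i) \<le> V i" "V i - V (Suc i) \<le> 1"
    using V_Suc[of i] s01(1)[of i] by simp_all
qed

lemma approx_profile_Vbar_inf:
  assumes "V \<in> Vbar_inf" "\<forall>i. \<exists>m::nat. V i = real m / real N"
  shows "approx_profile N 0 V"
proof -
  have "V m \<le> V j" if "j \<le> m" for j m
    using that by (induction m rule: dec_induct) (auto intro: order_trans Vbar_inf_props(3)[OF assms(1)])
  moreover have "on_grid N (V j)" for j
    using assms(2) on_grid_of_nat by metis
  ultimately show ?thesis
    using Vbar_inf_props[OF assms(1)]
    unfolding approx_profile_def near_monotone_def unit_steps_def by auto
qed

section \<open>Frequencies of the uniform variables over blocks of jumps\<close>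

lemma le_of_forall_pos_le_add_mult:
  fixes x y C :: real
  assumes "\<And>\<eta>. 0 < \<eta> \<Longrightarrow> x \<le> y + C * \<eta>" "0 \<le> C"
  shows "x \<le> y"
proof (rule field_le_epsilon)
  fix \<epsilon> :: real assume "0 < \<epsilon>"
  with assms(2) have "C * (\<epsilon> / (C + 1)) \<le> \<epsilon>"
    by (simp add: field_simps)
  with assms(1)[of "\<epsilon> / (C + 1)"] \<open>0 < \<epsilon>\<close> assms(2) show "x \<le> y + \<epsilon>"
    by simp
qed

lemma card_filter_greaterThanAtMost_split:
  fixes a K0 K1 :: nat
  assumes "a \<le> K0" "K0 \<le> K1"
  shows "card {k \<in> {a<..K1}. P k} = card {k \<in> {a<..K0}. P k} + card {k \<in> {K0<..K1}. P k}"
proof -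
  have "{k \<in> {a<..K1}. P k} = {k \<in> {a<..K0}. P k} \<union> {k \<in> {K0<..K1}. P k}"
    using assms by auto
  then show ?thesis
    by (simp add: card_Un_disjoint disjoint_iff)
qed

definition block_freq :: "nat \<Rightarrow> nat \<Rightarrow> nat \<Rightarrow> (nat \<Rightarrow> bool) \<Rightarrow> real" where
  "block_freq K0 K1 N P = real (card {k \<in> {K0<..K1}. P k}) / real N"

lemma block_freq_nonneg: "0 \<le> block_freq K0 K1 N P"
  by (simp add: block_freq_def)

lemma block_freq_mono:
  assumes "\<And>k. k \<in> {K0<..K1} \<Longrightarrow> P k \<Longrightarrow> Q k"
  shows "block_freq K0 K1 N P \<le> block_freq K0 K1 N Q"
proof -
  have "card {k \<in> {K0<..K1}. P k} \<le> card {k \<in> {K0<..K1}. Q k}"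
    using assms by (intro card_mono) auto
  then show ?thesis
    unfolding block_freq_def by (simp add: divide_right_mono)
qed

lemma block_freq_True:
  assumes "K0 \<le> K1"
  shows "block_freq K0 K1 N (\<lambda>_. True) = (real K1 - real K0) / real N"
proof -
  have "{k \<in> {K0<..K1}. True} = {K0<..K1}"
    by blast
  with assms show ?thesis
    unfolding block_freq_def by (simp add: of_nat_diff)
qed

lemma block_freq_disjoint:
  assumes "\<And>k. k \<in> {K0<..K1} \<Longrightarrow> P k \<Longrightarrow> \<not> Q k"
  shows "block_freq K0 K1 N P + block_freq K0 K1 N Q \<le> block_freq K0 K1 N (\<lambda>_. True)"
proof -
  have "card {k \<in> {K0<..K1}. P k} + card {k \<in> {K0<..K1}. Q k}
      = card ({k \<in> {K0<..K1}. P k} \<union> {k \<in> {K0<..K1}. Q k})"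
    using assms by (intro card_Un_disjoint[symmetric]) auto
  also have "\<dots> \<le> card {k \<in> {K0<..K1}. True}"
    by (intro card_mono) auto
  finally show ?thesis
    unfolding block_freq_def by (simp add: add_divide_distrib[symmetric] divide_right_mono)
qed

locale block_lln =
  fixes K0 K1 N :: "nat \<Rightarrow> nat" and U :: "nat \<Rightarrow> real" and R :: real
  assumes freq_interval: "\<And>a b. 0 \<le> a \<Longrightarrow> a < b \<Longrightarrow> b \<le> 1 \<Longrightarrow>
      (\<lambda>n. block_freq (K0 n) (K1 n) (N n) (\<lambda>k. a \<le> U k \<and> U k < b)) \<longlonglongrightarrow> (b - a) * R"
    and freq_all: "(\<lambda>n. block_freq (K0 n) (K1 n) (N n) (\<lambda>_. True)) \<longlonglongrightarrow> R"
begin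

abbreviation freq :: "nat \<Rightarrow> (nat \<Rightarrow> bool) \<Rightarrow> real" where
  "freq n P \<equiv> block_freq (K0 n) (K1 n) (N n) P"

lemma R_nonneg: "0 \<le> R"
  using freq_all by (rule tendsto_lowerbound) (simp_all add: block_freq_nonneg)

lemma freq_interval_tendsto:
  assumes "0 \<le> a" "a \<le> b" "b \<le> 1"
  shows "(\<lambda>n. freq n (\<lambda>k. a \<le> U k \<and> U k < b)) \<longlonglongrightarrow> (b - a) * R"
proof (cases "a = b")
  case True
  then have empty: "{k \<in> {K0 n<..K1 n}. a \<le> U k \<and> U k < b} = {}" for n
    by auto
  show ?thesis
    unfolding block_freq_def empty using True by simp
qed (use assms freq_interval in simp)

lemma freq_le_interval:
  assumes "0 \<le> \<alpha>" "\<alpha> \<le> 1" "\<alpha> < \<beta>"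
    and P: "\<forall>\<^sub>F n in sequentially. \<forall>k\<in>{K0 n<..K1 n}. P n k \<longrightarrow> \<alpha> \<le> U k \<and> U k < \<beta>"
    and X: "(\<lambda>n. freq n (P n)) \<longlonglongrightarrow> X"
  shows "X \<le> (\<beta> - \<alpha>) * R"
proof (cases "\<beta> \<le> 1")
  case True
  have "\<forall>\<^sub>F n in sequentially. freq n (P n) \<le> freq n (\<lambda>k. \<alpha> \<le> U k \<and> U k < \<beta>)"
    using P by eventually_elim (intro block_freq_mono, blast)
  then show ?thesis
    by (rule tendsto_le[OF trivial_limit_sequentially freq_interval[OF assms(1,3) True] X])
next
  case False
  have "\<forall>\<^sub>F n in sequentially. freq n (P n) \<le> freq n (\<lambda>_. True) - freq n (\<lambda>k. 0 \<le> U k \<and> U k < \<alpha>)"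
    using P
  proof eventually_elim
    case (elim n)
    then have "freq n (P n) + freq n (\<lambda>k. 0 \<le> U k \<and> U k < \<alpha>) \<le> freq n (\<lambda>_. True)"
      by (intro block_freq_disjoint) auto
    then show ?case
      by linarith
  qed
  moreover have "(\<lambda>n. freq n (\<lambda>_. True) - freq n (\<lambda>k. 0 \<le> U k \<and> U k < \<alpha>)) \<longlonglongrightarrow> R - (\<alpha> - 0) * R"
    using freq_all freq_interval_tendsto[of 0 \<alpha>] assms(1,2) by (intro tendsto_diff) simp_all
  ultimately have "X \<le> R - (\<alpha> - 0) * R"
    by (rule tendsto_le[OF trivial_limit_sequentially _ X, rotated])
  also have "\<dots> = (1 - \<alpha>) * R"
    by (simp add: algebra_simps)
  also have "\<dots> \<le> (\<beta> - \<alpha>) * R"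
    using False R_nonneg by (intro mult_right_mono) auto
  finally show ?thesis .
qed

lemma freq_ge_interval:
  assumes "0 \<le> \<alpha>" "\<alpha> \<le> \<beta>" "\<beta> \<le> 1"
    and P: "\<forall>\<^sub>F n in sequentially. \<forall>k\<in>{K0 n<..K1 n}. \<alpha> \<le> U k \<and> U k < \<beta> \<longrightarrow> P n k"
    and X: "(\<lambda>n. freq n (P n)) \<longlonglongrightarrow> X"
  shows "(\<beta> - \<alpha>) * R \<le> X"
proof -
  have "\<forall>\<^sub>F n in sequentially. freq n (\<lambda>k. \<alpha> \<le> U k \<and> U k < \<beta>) \<le> freq n (P n)"
    using P by eventually_elim (intro block_freq_mono, blast)
  then show ?thesis
    by (rule tendsto_le[OF trivial_limit_sequentially X freq_interval_tendsto[OF assms(1-3)]])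
qed

lemma affine_freq_le:
  fixes D :: "nat \<Rightarrow> nat \<Rightarrow> real"
  assumes "0 \<le> \<alpha>" "0 \<le> e" "\<alpha> + e \<le> 1" "0 \<le> d" "0 \<le> \<delta>"
    and dev: "\<And>n k. k \<in> {K0 n<..K1 n} \<Longrightarrow> \<bar>D n k - dn n\<bar> \<le> \<delta>n n"
    and dn: "dn \<longlonglongrightarrow> d" and \<delta>n: "\<delta>n \<longlonglongrightarrow> \<delta>"
    and X: "(\<lambda>n. freq n (\<lambda>k. U k \<in> (\<lambda>y. \<alpha> + e * y) ` {0..<D n k})) \<longlonglongrightarrow> X"
  shows "X \<le> R * e * (d + \<delta>)"
proof (rule le_of_forall_pos_le_add_mult)
  fix \<eta> :: real assume "0 < \<eta>"
  have "\<forall>\<^sub>F n in sequentially. dn n + \<delta>n n < d + \<delta> + \<eta>"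
    using tendsto_add[OF dn \<delta>n] \<open>0 < \<eta>\<close> by (intro order_tendstoD(2)) auto
  then have ev: "\<forall>\<^sub>F n in sequentially. \<forall>k\<in>{K0 n<..K1 n}.
      U k \<in> (\<lambda>y. \<alpha> + e * y) ` {0..<D n k} \<longrightarrow> \<alpha> \<le> U k \<and> U k < \<alpha> + (e * (d + \<delta> + \<eta>) + \<eta>)"
  proof (eventually_elim, intro ballI impI)
    fix n k assume n: "dn n + \<delta>n n < d + \<delta> + \<eta>" and k: "k \<in> {K0 n<..K1 n}"
      and "U k \<in> (\<lambda>y. \<alpha> + e * y) ` {0..<D n k}"
    then obtain y where "0 \<le> y" "y < D n k" "U k = \<alpha> + e * y"
      by auto
    moreover have "y \<le> d + \<delta> + \<eta>"
      using calculation(2) dev[OF k] n by linarith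
    ultimately show "\<alpha> \<le> U k \<and> U k < \<alpha> + (e * (d + \<delta> + \<eta>) + \<eta>)"
      using \<open>0 \<le> e\<close> \<open>0 < \<eta>\<close> mult_left_mono[of y "d + \<delta> + \<eta>" e] by auto
  qed
  have "0 \<le> e * (d + \<delta> + \<eta>)"
    using assms(2,4,5) \<open>0 < \<eta>\<close> by simp
  then have "X \<le> (\<alpha> + (e * (d + \<delta> + \<eta>) + \<eta>) - \<alpha>) * R"
    using assms(1-3) \<open>0 < \<eta>\<close> by (intro freq_le_interval[OF _ _ _ ev X]) auto
  then show "X \<le> R * e * (d + \<delta>) + R * (e + 1) * \<eta>"
    by (simp add: algebra_simps)
qed (use R_nonneg \<open>0 \<le> e\<close> in simp)

lemma affine_freq_ge:
  fixes D :: "nat \<Rightarrow> nat \<Rightarrow> real"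
  assumes "0 \<le> \<alpha>" "0 \<le> e" "\<alpha> + e \<le> 1" "d \<le> 1" "0 \<le> \<delta>"
    and dev: "\<And>n k. k \<in> {K0 n<..K1 n} \<Longrightarrow> \<bar>D n k - dn n\<bar> \<le> \<delta>n n"
    and dn: "dn \<longlonglongrightarrow> d" and \<delta>n: "\<delta>n \<longlonglongrightarrow> \<delta>"
    and X: "(\<lambda>n. freq n (\<lambda>k. U k \<in> (\<lambda>y. \<alpha> + e * y) ` {0..<D n k})) \<longlonglongrightarrow> X"
  shows "R * e * (d - \<delta>) \<le> X"
proof (rule le_of_forall_pos_le_add_mult)
  fix \<eta> :: real assume "0 < \<eta>"
  define m where "m = max 0 (d - \<delta> - \<eta>)"
  have m: "0 \<le> m" "d - \<delta> - \<eta> \<le> m" "m \<le> 1"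
    using \<open>d \<le> 1\<close> \<open>0 \<le> \<delta>\<close> \<open>0 < \<eta>\<close> unfolding m_def by auto
  have "\<forall>\<^sub>F n in sequentially. d - \<delta> - \<eta> < dn n - \<delta>n n"
    using tendsto_diff[OF dn \<delta>n] \<open>0 < \<eta>\<close> by (intro order_tendstoD(1)) auto
  then have ev: "\<forall>\<^sub>F n in sequentially. \<forall>k\<in>{K0 n<..K1 n}.
      \<alpha> \<le> U k \<and> U k < \<alpha> + e * m \<longrightarrow> U k \<in> (\<lambda>y. \<alpha> + e * y) ` {0..<D n k}"
  proof (eventually_elim, intro ballI impI)
    fix n k assume n: "d - \<delta> - \<eta> < dn n - \<delta>n n" and k: "k \<in> {K0 n<..K1 n}"
      and U: "\<alpha> \<le> U k \<and> U k < \<alpha> + e * m"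
    then have "0 < e * m"
      by linarith
    with m(1) \<open>0 \<le> e\<close> have "0 < e" "m = d - \<delta> - \<eta>"
      unfolding m_def by (auto simp: zero_less_mult_iff)
    moreover from this U have "(U k - \<alpha>) / e < m"
      by (simp add: divide_less_eq mult.commute)
    ultimately have "(U k - \<alpha>) / e < D n k"
      using n dev[OF k] by linarith
    with \<open>0 < e\<close> U show "U k \<in> (\<lambda>y. \<alpha> + e * y) ` {0..<D n k}"
      by (intro rev_image_eqI[of "(U k - \<alpha>) / e"]) simp_all
  qed
  have "e * m \<le> e"
    using m(3) \<open>0 \<le> e\<close> by (simp add: mult_left_le)
  then have "(\<alpha> + e * m - \<alpha>) * R \<le> X"
    using assms(1-3) m(1) \<open>0 \<le> e\<close> by (intro freq_ge_interval[OF _ _ _ ev X]) auto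
  moreover have "R * e * (d - \<delta> - \<eta>) \<le> R * e * m"
    using m(2) R_nonneg \<open>0 \<le> e\<close> by (intro mult_left_mono) simp_all
  ultimately show "R * e * (d - \<delta>) \<le> X + R * e * \<eta>"
    by (simp add: algebra_simps)
qed (use R_nonneg \<open>0 \<le> e\<close> in simp)

lemma tail_freq_le:
  assumes "0 \<le> q" "q \<le> 1"
    and P: "\<forall>\<^sub>F n in sequentially. \<forall>k\<in>{K0 n<..K1 n}. P n k \<longrightarrow> 1 - q \<le> U k \<and> U k < 1"
    and X: "(\<lambda>n. freq n (P n)) \<longlonglongrightarrow> X"
  shows "X \<le> q * R"
proof (rule le_of_forall_pos_le_add_mult)
  fix \<eta> :: real assume "0 < \<eta>"
  have "\<forall>\<^sub>F n in sequentially. \<forall>k\<in>{K0 n<..K1 n}. P n k \<longrightarrow> 1 - q \<le> U k \<and> U k < 1 + \<eta>"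
    using P by eventually_elim (use \<open>0 < \<eta>\<close> in fastforce)
  from freq_le_interval[OF _ _ _ this X] assms(1,2) \<open>0 < \<eta>\<close>
  show "X \<le> q * R + R * \<eta>"
    by (simp add: algebra_simps)
qed (use R_nonneg in simp)

lemma tail_freq_eq:
  assumes "0 \<le> q" "q \<le> 1"
    and P: "\<forall>\<^sub>F n in sequentially. \<forall>k\<in>{K0 n<..K1 n}. P n k \<longleftrightarrow> 1 - q \<le> U k \<and> U k < 1"
    and X: "(\<lambda>n. freq n (P n)) \<longlonglongrightarrow> X"
  shows "X = q * R"
proof (rule antisym)
  show "X \<le> q * R"
    using P by (intro tail_freq_le[OF assms(1,2) _ X]) (auto elim: eventually_mono)
  have "\<forall>\<^sub>F n in sequentially. \<forall>k\<in>{K0 n<..K1 n}. 1 - q \<le> U k \<and> U k < 1 \<longrightarrow> P n k"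
    using P by eventually_elim blast
  from freq_ge_interval[OF _ _ _ this X] assms(1,2) show "q * R \<le> X"
    by simp
qed

lemma point_freq_tendsto_0:
  assumes "0 \<le> x" "x < 1"
  shows "(\<lambda>n. freq n (\<lambda>k. U k = x)) \<longlonglongrightarrow> 0"
proof (rule order_tendstoI)
  fix \<epsilon> :: real assume "0 < \<epsilon>"
  define \<eta> where "\<eta> = min (1 - x) (\<epsilon> / (R + 1))"
  have \<eta>: "0 < \<eta>" "x + \<eta> \<le> 1"
    using assms \<open>0 < \<epsilon>\<close> R_nonneg unfolding \<eta>_def by auto
  have "\<eta> * R \<le> \<epsilon> / (R + 1) * R"
    unfolding \<eta>_def using R_nonneg by (intro mult_right_mono) auto
  also have "\<dots> = \<epsilon> * (R / (R + 1))"
    by simp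
  also have "\<dots> < \<epsilon> * 1"
    using \<open>0 < \<epsilon>\<close> R_nonneg by (intro mult_strict_left_mono) auto
  finally have "\<eta> * R < \<epsilon>"
    by simp
  then have "\<forall>\<^sub>F n in sequentially. freq n (\<lambda>k. x \<le> U k \<and> U k < x + \<eta>) < \<epsilon>"
    using freq_interval[of x "x + \<eta>"] assms \<eta> by (intro order_tendstoD(2)) auto
  then show "\<forall>\<^sub>F n in sequentially. freq n (\<lambda>k. U k = x) < \<epsilon>"
  proof eventually_elim
    case (elim n)
    have "freq n (\<lambda>k. U k = x) \<le> freq n (\<lambda>k. x \<le> U k \<and> U k < x + \<eta>)"
      by (rule block_freq_mono) (use \<eta>(1) in auto)
    with elim show ?case
      by linarith
  qed
next
  fix a :: real assume "a < 0"
  then show "\<forall>\<^sub>F n in sequentially. a < freq n (\<lambda>k. U k = x)"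
    using block_freq_nonneg by (intro always_eventually allI) (rule less_le_trans)
qed

end

section \<open>Analytic tools\<close>

lemma wnorm_coordinate_le: "ennreal (sqrt ((1/2)^i) * \<bar>x i\<bar>) \<le> wnorm x"
proof (cases "summable (\<lambda>i. (1/2)^i * (x i)^2)")
  case True
  have "(1/2::real)^i * (x i)^2 \<le> (\<Sum>k. (1/2)^k * (x k)^2)"
    using sum_le_suminf[OF True, of "{i}"] by simp
  then have "sqrt ((1/2::real)^i * (x i)^2) \<le> sqrt (\<Sum>k. (1/2)^k * (x k)^2)"
    by simp
  with True show ?thesis
    by (simp add: wnorm_def real_sqrt_mult ennreal_leI)
qed (simp add: wnorm_def)

lemma wnorm_tendsto_0_imp_coordinate:
  assumes "(\<lambda>n. wnorm (\<lambda>i. X n i - x i)) \<longlonglongrightarrow> 0"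
  shows "(\<lambda>n. X n i) \<longlonglongrightarrow> x i"
proof -
  let ?c = "sqrt ((1/2::real)^i)"
  have "ennreal (?c * \<bar>X n i - x i\<bar>) \<le> wnorm (\<lambda>i. X n i - x i)" for n
    using wnorm_coordinate_le[of i "\<lambda>i. X n i - x i"] by simp
  then have "(\<lambda>n. ennreal (?c * \<bar>X n i - x i\<bar>)) \<longlonglongrightarrow> 0"
    by (intro tendsto_sandwich[OF _ _ tendsto_const assms]) simp_all
  then have "(\<lambda>n. ?c * \<bar>X n i - x i\<bar>) \<longlonglongrightarrow> 0"
    by (simp add: ennreal_tendsto_0_iff)
  then have "(\<lambda>n. inverse ?c * (?c * \<bar>X n i - x i\<bar>)) \<longlonglongrightarrow> inverse ?c * 0"
    by (rule tendsto_mult_left)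
  then have "(\<lambda>n. X n i - x i) \<longlonglongrightarrow> 0"
    by (simp add: tendsto_rabs_zero_iff)
  then show ?thesis
    by (rule LIM_zero_cancel)
qed

lemma dZ_tendsto_0_imp_coordinate:
  assumes "(\<lambda>n. dZ T (X n) x) \<longlonglongrightarrow> 0" "s \<in> {0..T}"
  shows "(\<lambda>n. X n s i) \<longlonglongrightarrow> x s i"
proof (rule wnorm_tendsto_0_imp_coordinate)
  have "wnorm (\<lambda>i. X n s i - x s i) \<le> dZ T (X n) x" for n
    unfolding dZ_def using assms(2) by (rule SUP_upper)
  then show "(\<lambda>n. wnorm (\<lambda>i. X n s i - x s i)) \<longlonglongrightarrow> 0"
    by (intro tendsto_sandwich[OF _ _ tendsto_const assms(1)]) simp_all
qed

lemma DERIV_eq_of_increment_bound: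
  assumes D: "(f has_real_derivative D) (at t)" and "0 < h0"
    and bound: "\<And>h. 0 < h \<Longrightarrow> h < h0 \<Longrightarrow> \<bar>f (t + h) - f t - L * h\<bar> \<le> C * h * h"
  shows "D = L"
proof -
  have "((\<lambda>h. (f (t + h) - f t) / h) \<longlongrightarrow> D) (at_right 0)"
    using DERIV_D[OF D] by (simp add: filterlim_at_split)
  moreover have "((\<lambda>h. (f (t + h) - f t) / h) \<longlongrightarrow> L) (at_right 0)"
  proof (rule LIM_zero_cancel, rule Lim_null_comparison)
    have "\<forall>\<^sub>F h in at_right 0. 0 < h \<and> h < h0"
      using \<open>0 < h0\<close> by (auto simp: eventually_at_right_field intro!: exI[of _ h0])
    then show "\<forall>\<^sub>F h in at_right 0. norm ((f (t + h) - f t) / h - L) \<le> C * h"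
    proof eventually_elim
      case (elim h)
      then have "norm ((f (t + h) - f t) / h - L) = \<bar>f (t + h) - f t - L * h\<bar> / h"
        by (simp add: field_simps)
      also have "\<dots> \<le> C * h * h / h"
        using bound elim by (intro divide_right_mono) auto
      finally show ?case
        using elim by simp
    qed
    show "((\<lambda>h. C * h) \<longlongrightarrow> 0) (at_right 0)"
      by (intro tendsto_eq_intros) auto
  qed
  ultimately show ?thesis
    by (rule tendsto_unique[OF trivial_limit_at_right_real])
qed

lemma DERIV_le_of_increment_bound:
  assumes D: "(f has_real_derivative D) (at t)" and "0 < h0"
    and bound: "\<And>h. 0 < h \<Longrightarrow> h < h0 \<Longrightarrow> f (t + h) - f t \<le> M * h"
  shows "D \<le> M"
proof (rule tendsto_upperbound)
  show "((\<lambda>h. (f (t + h) - f t) / h) \<longlongrightarrow> D) (at_right 0)"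
    using DERIV_D[OF D] by (simp add: filterlim_at_split)
  have "\<forall>\<^sub>F h in at_right 0. 0 < h \<and> h < h0"
    using \<open>0 < h0\<close> by (auto simp: eventually_at_right_field intro!: exI[of _ h0])
  then show "\<forall>\<^sub>F h in at_right 0. (f (t + h) - f t) / h \<le> M"
    by eventually_elim (use bound in \<open>simp add: divide_le_eq\<close>)
qed simp

lemma tendsto_ratio_along:
  fixes f :: "nat \<Rightarrow> real"
  assumes f: "(\<lambda>N. f N / real N) \<longlonglongrightarrow> x" and K: "filterlim K at_top sequentially"
    and KM: "(\<lambda>n. real (K n) / real (M n)) \<longlonglongrightarrow> L"
  shows "(\<lambda>n. f (K n) / real (M n)) \<longlonglongrightarrow> x * L"
proof (rule Lim_transform_eventually)
  show "(\<lambda>n. f (K n) / real (K n) * (real (K n) / real (M n))) \<longlonglongrightarrow> x * L"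
    using filterlim_compose[OF f K] KM by (rule tendsto_mult)
  have "\<forall>\<^sub>F n in sequentially. 1 \<le> K n"
    using K by (simp add: filterlim_at_top)
  then show "\<forall>\<^sub>F n in sequentially. f (K n) / real (K n) * (real (K n) / real (M n)) = f (K n) / real (M n)"
    by eventually_elim simp
qed

lemma filterlim_at_top_of_ratio:
  assumes KM: "(\<lambda>n. real (K n) / real (M n)) \<longlonglongrightarrow> L" and "0 < L" and M: "filterlim M at_top sequentially"
  shows "filterlim K at_top sequentially"
proof -
  have "filterlim (\<lambda>n. real (K n) / real (M n) * real (M n)) at_top sequentially"
    using filterlim_tendsto_pos_mult_at_top[OF KM \<open>0 < L\<close> filterlim_compose[OF filterlim_real_sequentially M]]
    by (simp add: o_def)
  moreover have ev: "\<forall>\<^sub>F n in sequentially. real (K n) / real (M n) * real (M n) = real (K n)"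
    using M by (simp add: filterlim_at_top eventually_mono[of "\<lambda>n. 1 \<le> M n"])
  ultimately have "filterlim (\<lambda>n. real (K n)) at_top sequentially"
    using filterlim_cong[OF refl refl ev] by simp
  then show ?thesis
    by (simp add: filterlim_sequentially_iff_filterlim_real)
qed

section \<open>Limits along the convergent subsequence\<close>

locale fluid_limit =
  fixes lam p T :: real and W :: "real \<Rightarrow> nat" and U :: "nat \<Rightarrow> real"
    and V0 :: "nat \<Rightarrow> nat \<Rightarrow> real" and v0 :: "nat \<Rightarrow> real" and r :: "nat \<Rightarrow> nat"
    and v a l c :: "real \<Rightarrow> nat \<Rightarrow> real" and t :: real
  assumes lam: "0 \<le> lam" and p: "0 \<le> p" "p \<le> 1"
    and W_path: "counting_path W"
    and U_range: "\<forall>k\<ge>1. 0 \<le> U k \<and> U k \<le> 1"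
    and V0_space: "\<forall>N\<ge>1. V0 N \<in> Vbar_inf \<and> (\<forall>i. \<exists>m::nat. V0 N i = real m / real N)"
    and C_W: "(\<lambda>N. SUP s\<in>{0..T}. ennreal \<bar>real (W (real N * s)) / real N - (1 + lam) * s\<bar>)
               \<longlonglongrightarrow> 0"
    and C_U: "\<forall>a b. 0 \<le> a \<and> a < b \<and> b \<le> 1 \<longrightarrow>
               (\<lambda>N. real (card {k \<in> {1..N}. a \<le> U k \<and> U k < b}) / real N) \<longlonglongrightarrow> b - a"
    and init: "(\<lambda>N. wnorm (\<lambda>i. V0 N i - v0 i)) \<longlonglongrightarrow> 0"
    and subseq: "strict_mono r"
    and limV: "(\<lambda>n. dZ T (XV lam p W U V0 (r n)) v) \<longlonglongrightarrow> 0"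
    and limA: "(\<lambda>n. dZ T (XA lam p W U V0 (r n)) a) \<longlonglongrightarrow> 0"
    and limL: "(\<lambda>n. dZ T (XL lam p W U V0 (r n)) l) \<longlonglongrightarrow> 0"
    and limC: "(\<lambda>n. dZ T (XC lam p W U V0 (r n)) c) \<longlonglongrightarrow> 0"
    and t: "t \<in> {0<..<T}"
begin

abbreviation jumps :: "nat \<Rightarrow> real \<Rightarrow> nat" where
  "jumps n s \<equiv> W (real (r n) * s)"

abbreviation Vn :: "nat \<Rightarrow> nat \<Rightarrow> nat \<Rightarrow> real" where
  "Vn n \<equiv> V_after lam p (r n) (V0 (r n)) U"

lemma XV_eq: "XV lam p W U V0 (r n) s = Vn n (jumps n s)"
  by (simp add: XV_def)

lemma W_0: "W 0 = 0"
  using W_path by (simp add: counting_path_def)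

lemma jumps_mono:
  assumes "0 \<le> s" "s \<le> s'"
  shows "jumps n s \<le> jumps n s'"
proof -
  have "mono_on {0..} W"
    using W_path by (simp add: counting_path_def)
  moreover have "real (r n) * s \<le> real (r n) * s'"
    using assms(2) by (simp add: mult_left_mono)
  ultimately show ?thesis
    using assms by (simp add: mono_onD)
qed

lemma eventually_r_ge: "\<forall>\<^sub>F n in sequentially. m \<le> r n"
  using seq_suble[OF subseq] by (intro eventually_sequentiallyI[of m]) (metis le_trans)

lemma X_tendsto:
  assumes "s \<in> {0..T}"
  shows "(\<lambda>n. XV lam p W U V0 (r n) s i) \<longlonglongrightarrow> v s i" "(\<lambda>n. XA lam p W U V0 (r n) s i) \<longlonglongrightarrow> a s i"
    "(\<lambda>n. XL lam p W U V0 (r n) s i) \<longlonglongrightarrow> l s i" "(\<lambda>n. XC lam p W U V0 (r n) s i) \<longlonglongrightarrow> c s i"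
  by (intro dZ_tendsto_0_imp_coordinate[OF _ assms] limV limA limL limC)+

lemma V0_tendsto: "(\<lambda>n. V0 (r n) i) \<longlonglongrightarrow> v0 i"
  using LIMSEQ_subseq_LIMSEQ[OF wnorm_tendsto_0_imp_coordinate[OF init] subseq] by (simp add: o_def)

lemma v_init: "v 0 = v0"
proof
  fix i
  have "\<forall>\<^sub>F n in sequentially. V0 (r n) i = XV lam p W U V0 (r n) 0 i"
    using eventually_r_ge[of 1]
  proof eventually_elim
    case (elim n)
    with V0_space have "V0 (r n) \<in> Vbar_inf"
      by blast
    from XV_at_0[of W V0 "r n" lam p U, OF W_path Vbar_inf_props(1)[OF this]] show ?case
      by simp
  qed
  from Lim_transform_eventually[OF V0_tendsto this] have "(\<lambda>n. XV lam p W U V0 (r n) 0 i) \<longlonglongrightarrow> v0 i" .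
  moreover have "(\<lambda>n. XV lam p W U V0 (r n) 0 i) \<longlonglongrightarrow> v 0 i"
    using t by (intro X_tendsto) simp
  ultimately show "v 0 i = v0 i"
    by (rule LIMSEQ_unique[symmetric])
qed

lemma v_0_minus_1: "s \<in> {0..T} \<Longrightarrow> v s 0 - v s 1 = 1"
  using LIMSEQ_unique[OF tendsto_diff[OF X_tendsto(1) X_tendsto(1)]] by (simp add: XV_def V_of_0)

lemma v_balance:
  assumes "s \<in> {0..T}" "1 \<le> i"
  shows "v s i = v0 i + a s i - l s i - c s i"
proof -
  have "XV lam p W U V0 (r n) s i = V0 (r n) i + XA lam p W U V0 (r n) s i - XL lam p W U V0 (r n) s i
      - XC lam p W U V0 (r n) s i" for n
    using assms(2) by (cases "counters_after lam p (r n) (V0 (r n)) U (jumps n s)")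
      (simp add: XV_def XA_def XL_def XC_def V_of_def)
  with X_tendsto[OF assms(1), of i] V0_tendsto[of i]
  have "(\<lambda>n. XV lam p W U V0 (r n) s i) \<longlonglongrightarrow> v0 i + a s i - l s i - c s i"
    by (simp only:) (intro tendsto_intros)
  with X_tendsto(1)[OF assms(1)] show ?thesis
    using LIMSEQ_unique by blast
qed

lemma jumps_ratio_tendsto:
  assumes "s \<in> {0..T}"
  shows "(\<lambda>n. real (jumps n s) / real (r n)) \<longlonglongrightarrow> (1 + lam) * s"
proof -
  have "ennreal \<bar>real (W (real N * s)) / real N - (1 + lam) * s\<bar>
      \<le> (SUP s\<in>{0..T}. ennreal \<bar>real (W (real N * s)) / real N - (1 + lam) * s\<bar>)" for N
    using assms by (rule SUP_upper)
  then have "(\<lambda>N. ennreal \<bar>real (W (real N * s)) / real N - (1 + lam) * s\<bar>) \<longlonglongrightarrow> 0"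
    by (intro tendsto_sandwich[OF _ _ tendsto_const C_W]) simp_all
  then have "(\<lambda>N. real (W (real N * s)) / real N - (1 + lam) * s) \<longlonglongrightarrow> 0"
    by (simp add: ennreal_tendsto_0_iff tendsto_rabs_zero_iff)
  from LIMSEQ_subseq_LIMSEQ[OF LIM_zero_cancel[OF this] subseq] show ?thesis
    by (simp add: o_def)
qed

lemma prefix_freq_tendsto:
  assumes "s \<in> {0..T}" "0 \<le> \<alpha>" "\<alpha> < \<beta>" "\<beta> \<le> 1"
  shows "(\<lambda>n. block_freq 0 (jumps n s) (r n) (\<lambda>k. \<alpha> \<le> U k \<and> U k < \<beta>)) \<longlonglongrightarrow> (\<beta> - \<alpha>) * ((1 + lam) * s)"
proof (cases "s = 0")
  case True
  then show ?thesis
    by (simp add: block_freq_def W_0)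
next
  case False
  with assms(1) lam have "0 < (1 + lam) * s"
    by simp
  have r: "filterlim r at_top sequentially"
    using subseq by (rule filterlim_subseq)
  have "(\<lambda>N. real (card {k \<in> {0<..N}. \<alpha> \<le> U k \<and> U k < \<beta>}) / real N) \<longlonglongrightarrow> \<beta> - \<alpha>"
    using C_U assms(2-4) by (simp add: atLeastSucAtMost_greaterThanAtMost[of 0, simplified])
  from tendsto_ratio_along[OF this
      filterlim_at_top_of_ratio[OF jumps_ratio_tendsto[OF assms(1)] \<open>0 < (1 + lam) * s\<close> r]
      jumps_ratio_tendsto[OF assms(1)]]
  show ?thesis
    by (simp add: block_freq_def)
qed

lemma block_lln_between:
  assumes "0 \<le> s" "s \<le> s'" "s' \<le> T"
  shows "block_lln (\<lambda>n. jumps n s) (\<lambda>n. jumps n s') r U ((1 + lam) * (s' - s))"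
proof
  fix \<alpha> \<beta> :: real assume ab: "0 \<le> \<alpha>" "\<alpha> < \<beta>" "\<beta> \<le> 1"
  have split: "block_freq (jumps n s) (jumps n s') (r n) P
      = block_freq 0 (jumps n s') (r n) P - block_freq 0 (jumps n s) (r n) P" for n P
    using card_filter_greaterThanAtMost_split[of 0 "jumps n s" "jumps n s'" P] jumps_mono[OF assms(1,2)]
    by (simp add: block_freq_def add_divide_distrib)
  have "(\<beta> - \<alpha>) * ((1 + lam) * (s' - s)) = (\<beta> - \<alpha>) * ((1 + lam) * s') - (\<beta> - \<alpha>) * ((1 + lam) * s)"
    by (simp add: algebra_simps)
  then show "(\<lambda>n. block_freq (jumps n s) (jumps n s') (r n) (\<lambda>k. \<alpha> \<le> U k \<and> U k < \<beta>))
      \<longlonglongrightarrow> (\<beta> - \<alpha>) * ((1 + lam) * (s' - s))"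
    unfolding split using assms ab by (simp only:) (intro tendsto_diff prefix_freq_tendsto; simp)
next
  have split: "block_freq (jumps n s) (jumps n s') (r n) (\<lambda>_. True)
      = real (jumps n s') / real (r n) - real (jumps n s) / real (r n)" for n
    using block_freq_True[OF jumps_mono[OF assms(1,2)]] by (simp add: diff_divide_distrib)
  have "(1 + lam) * (s' - s) = (1 + lam) * s' - (1 + lam) * s"
    by (simp add: algebra_simps)
  then show "(\<lambda>n. block_freq (jumps n s) (jumps n s') (r n) (\<lambda>_. True)) \<longlonglongrightarrow> (1 + lam) * (s' - s)"
    unfolding split using assms by (simp only:) (intro tendsto_diff jumps_ratio_tendsto; simp)
qed

lemma tie_freq_tendsto_0:
  assumes "s \<in> {0<..T}"
  shows "(\<lambda>n. 3 * real (tie_count lam U (jumps n s)) / real (r n)) \<longlonglongrightarrow> 0"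
proof -
  interpret B: block_lln "\<lambda>_. 0" "\<lambda>n. jumps n s" r U "(1 + lam) * s"
    using block_lln_between[of 0 s] assms by (simp add: W_0)
  let ?a = "lam / (1 + lam)"
  have "tie_count lam U (jumps n s) \<le>
      card {k \<in> {0<..jumps n s}. U k = 0} + card {k \<in> {0<..jumps n s}. U k = ?a}" for n
  proof -
    have "{m \<in> {1..jumps n s}. U m = 0 \<or> U m = ?a}
        = {k \<in> {0<..jumps n s}. U k = 0} \<union> {k \<in> {0<..jumps n s}. U k = ?a}"
      by auto
    then show ?thesis
      unfolding tie_count_def by (simp only: card_Un_le)
  qed
  then have bound: "3 * real (tie_count lam U (jumps n s)) / real (r n)
      \<le> 3 * (B.freq n (\<lambda>k. U k = 0) + B.freq n (\<lambda>k. U k = ?a))" for n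
    unfolding block_freq_def add_divide_distrib[symmetric] times_divide_eq_right[symmetric]
    by (intro mult_left_mono divide_right_mono) (simp_all only: of_nat_add[symmetric] of_nat_le_iff)
  have "(\<lambda>n. B.freq n (\<lambda>k. U k = 0)) \<longlonglongrightarrow> 0" "(\<lambda>n. B.freq n (\<lambda>k. U k = ?a)) \<longlonglongrightarrow> 0"
    using lam by (auto intro: B.point_freq_tendsto_0)
  from tendsto_mult_left[OF tendsto_add[OF this], of 3]
  have upper: "(\<lambda>n. 3 * (B.freq n (\<lambda>k. U k = 0) + B.freq n (\<lambda>k. U k = ?a))) \<longlonglongrightarrow> 0"
    by simp
  show ?thesis
    by (rule tendsto_sandwich[OF _ _ tendsto_const upper]) (use bound in \<open>auto intro: always_eventually\<close>)
qed

lemma eventually_approx_profile: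
  "\<forall>\<^sub>F n in sequentially.
     approx_profile (r n) (3 * real (tie_count lam U (jumps n s)) / real (r n)) (XV lam p W U V0 (r n) s)"
  using eventually_r_ge[of 2]
proof eventually_elim
  case (elim n)
  with V0_space have "approx_profile (r n) 0 (V0 (r n))"
    by (intro approx_profile_Vbar_inf) auto
  from approx_profile_V_after[OF elim lam p U_range this] show ?case
    by (simp add: XV_eq)
qed

lemma v_profile:
  assumes "s \<in> {0<..T}"
  shows "1 \<le> j \<Longrightarrow> 0 \<le> v s j" "v s (Suc j) \<le> v s j" "v s j - v s (Suc j) \<le> 1"
proof -
  let ?D = "\<lambda>n. 3 * real (tie_count lam U (jumps n s)) / real (r n)"
  let ?X = "\<lambda>n. XV lam p W U V0 (r n) s"
  have D: "?D \<longlonglongrightarrow> 0"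
    using assms by (rule tie_freq_tendsto_0)
  have X: "(\<lambda>n. ?X n j) \<longlonglongrightarrow> v s j" for j
    using assms by (intro X_tendsto) simp
  note ev = eventually_approx_profile[of s]
  show "0 \<le> v s j" if "1 \<le> j"
  proof -
    have "\<forall>\<^sub>F n in sequentially. - ?D n \<le> ?X n j"
      using ev by eventually_elim (rule approx_profileD(3)[OF _ that])
    from tendsto_le[OF trivial_limit_sequentially X tendsto_minus[OF D] this] show ?thesis
      by simp
  qed
  show "v s (Suc j) \<le> v s j"
  proof (cases "j = 0")
    case True
    then show ?thesis
      using v_0_minus_1[of s] assms by simp
  next
    case False
    have "\<forall>\<^sub>F n in sequentially. ?X n (Suc j) - ?X n j \<le> ?D n"
      using ev by eventually_elim (rule approx_profileD(4), use False in simp_all)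
    from tendsto_le[OF trivial_limit_sequentially D tendsto_diff[OF X X] this] show ?thesis
      by simp
  qed
  have "\<forall>\<^sub>F n in sequentially. ?X n j - ?X n (Suc j) \<le> 1"
    using ev by eventually_elim (rule approx_profileD(5))
  from tendsto_le[OF trivial_limit_sequentially tendsto_const tendsto_diff[OF X X] this]
  show "v s j - v s (Suc j) \<le> 1" .
qed

lemma counter_increments:
  assumes "0 \<le> s" "s \<le> s'"
  shows "XA lam p W U V0 (r n) s' i - XA lam p W U V0 (r n) s i =
      block_freq (jumps n s) (jumps n s') (r n) (\<lambda>k. arrival_at lam (Vn n (k - 1)) (U k) i)"
    "XL lam p W U V0 (r n) s' i - XL lam p W U V0 (r n) s i =
      block_freq (jumps n s) (jumps n s') (r n) (\<lambda>k. departure_at lam p (Vn n (k - 1)) (U k) i)"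
    "XC lam p W U V0 (r n) s' i - XC lam p W U V0 (r n) s i =
      block_freq (jumps n s) (jumps n s') (r n) (\<lambda>k. cleaning_at lam p (Vn n (k - 1)) (U k) i)"
  unfolding XA_def XL_def XC_def block_freq_def
  by (rule increments_eq_card[OF _ jumps_mono[OF assms]], simp only: counters_after_Suc diff_Suc_1)+

lemma V_block_dist:
  assumes "0 \<le> s" "s \<le> s'" "k \<in> {jumps n s<..jumps n s'}"
  shows "\<bar>Vn n (k - 1) j - Vn n (jumps n s) j\<bar> \<le> 2 * block_freq (jumps n s) (jumps n s') (r n) (\<lambda>_. True)"
proof -
  have "\<bar>Vn n (k - 1) j - Vn n (jumps n s) j\<bar> \<le> 2 * real (k - 1 - jumps n s) / real (r n)"
    using assms(3) by (intro V_after_dist) auto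
  also have "\<dots> \<le> 2 * ((real (jumps n s') - real (jumps n s)) / real (r n))"
    using assms(3) by (auto intro!: divide_right_mono simp: of_nat_diff)
  finally show ?thesis
    using block_freq_True[OF jumps_mono[OF assms(1,2)]] by simp
qed

lemma v_step_bounds:
  assumes "s \<in> {0<..T}"
  shows "0 \<le> v s j - v s (Suc j)" "v s j - v s (Suc j) \<le> 1"
  using v_profile[OF assms] by simp_all

lemma affine_event_increment_bound:
  assumes h: "0 < h" "h < T - t" and e: "0 \<le> \<alpha>" "0 \<le> e" "\<alpha> + e \<le> 1" "(1 + lam) * e = \<rho>"
    and d: "0 \<le> v t j - v t j'" "v t j - v t j' \<le> 1"
    and X: "(\<lambda>n. block_freq (jumps n t) (jumps n (t + h)) (r n)
      (\<lambda>k. U k \<in> (\<lambda>y. \<alpha> + e * y) ` {0..<Vn n (k - 1) j - Vn n (k - 1) j'})) \<longlonglongrightarrow> Y"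
  shows "\<bar>Y - \<rho> * (v t j - v t j') * h\<bar> \<le> 4 * \<rho> * (1 + lam) * h * h"
proof -
  interpret B: block_lln "\<lambda>n. jumps n t" "\<lambda>n. jumps n (t + h)" r U "(1 + lam) * (t + h - t)"
    using t h by (intro block_lln_between) auto
  have ts: "0 \<le> t" "t \<le> t + h"
    using t h by auto
  let ?d = "v t j - v t j'" and ?\<delta> = "4 * ((1 + lam) * (t + h - t))"
  let ?D = "\<lambda>n k. Vn n (k - 1) j - Vn n (k - 1) j'" and ?dn = "\<lambda>n. Vn n (jumps n t) j - Vn n (jumps n t) j'"
  have dev: "\<bar>?D n k - ?dn n\<bar> \<le> 4 * B.freq n (\<lambda>_. True)" if "k \<in> {jumps n t<..jumps n (t + h)}" for n k
    using V_block_dist[OF ts that, of j] V_block_dist[OF ts that, of j'] by linarith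
  have dn: "?dn \<longlonglongrightarrow> ?d"
    using t by (intro tendsto_diff X_tendsto(1)[unfolded XV_eq]) auto
  have \<delta>n: "(\<lambda>n. 4 * B.freq n (\<lambda>_. True)) \<longlonglongrightarrow> ?\<delta>"
    using B.freq_all by (rule tendsto_mult_left)
  have "0 \<le> ?\<delta>"
    using lam h by simp
  have Re: "(1 + lam) * (t + h - t) * e = \<rho> * h"
    using e(4)[symmetric] by (simp add: algebra_simps)
  from B.affine_freq_le[OF e(1-3) d(1) \<open>0 \<le> ?\<delta>\<close> dev dn \<delta>n X] B.affine_freq_ge[OF e(1-3) d(2) \<open>0 \<le> ?\<delta>\<close> dev dn \<delta>n X]
  show ?thesis
    unfolding Re by (simp add: abs_le_iff algebra_simps)
qed

lemma arrivals_increment_bound: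
  assumes h: "0 < h" "h < T - t" and i: "1 \<le> i"
  shows "\<bar>a (t + h) i - a t i - lam * (v t (i - 1) - v t i) * h\<bar> \<le> 4 * lam * (1 + lam) * h * h"
proof (rule affine_event_increment_bound[OF h])
  show "(\<lambda>n. block_freq (jumps n t) (jumps n (t + h)) (r n)
      (\<lambda>k. U k \<in> (\<lambda>y. 0 + lam / (1 + lam) * y) ` {0..<Vn n (k - 1) (i - 1) - Vn n (k - 1) i}))
      \<longlonglongrightarrow> a (t + h) i - a t i"
    using tendsto_diff[OF X_tendsto(2)[of "t + h" i] X_tendsto(2)[of t i]] t h i
    by (simp add: counter_increments(1) arrival_at_def)
qed (use t i lam v_step_bounds[of t "i - 1"] in \<open>simp_all add: field_simps\<close>)

lemma departures_increment_bound:
  assumes h: "0 < h" "h < T - t" and i: "1 \<le> i"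
  shows "\<bar>l (t + h) i - l t i - (1 - p) * (v t i - v t (i + 1)) * h\<bar> \<le> 4 * (1 - p) * (1 + lam) * h * h"
proof (rule affine_event_increment_bound[OF h])
  show "(\<lambda>n. block_freq (jumps n t) (jumps n (t + h)) (r n)
      (\<lambda>k. U k \<in> (\<lambda>y. lam / (1 + lam) + (1 - p) / (1 + lam) * y) ` {0..<Vn n (k - 1) i - Vn n (k - 1) (i + 1)}))
      \<longlonglongrightarrow> l (t + h) i - l t i"
    using tendsto_diff[OF X_tendsto(3)[of "t + h" i] X_tendsto(3)[of t i]] t h i
    by (simp add: counter_increments(2) departure_at_def)
  show "lam / (1 + lam) + (1 - p) / (1 + lam) \<le> 1"
    using jump_thresholds[OF lam, of p] lam p by simp
qed (use t lam p v_step_bounds[of t i] in \<open>simp_all add: field_simps\<close>)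

lemma cleaning_increment_le:
  assumes h: "0 < h" "h < T - t" and i: "1 \<le> i"
  shows "c (t + h) i - c t i \<le> p * h"
proof -
  interpret B: block_lln "\<lambda>n. jumps n t" "\<lambda>n. jumps n (t + h)" r U "(1 + lam) * (t + h - t)"
    using t h by (intro block_lln_between) auto
  have X: "(\<lambda>n. B.freq n (\<lambda>k. cleaning_at lam p (Vn n (k - 1)) (U k) i)) \<longlonglongrightarrow> c (t + h) i - c t i"
    using tendsto_diff[OF X_tendsto(4)[of "t + h" i] X_tendsto(4)[of t i]] t h
    by (simp add: counter_increments(3))
  have "c (t + h) i - c t i \<le> p / (1 + lam) * ((1 + lam) * (t + h - t))"
    using lam p by (intro B.tail_freq_le[OF _ _ _ X]) (auto simp: cleaning_at_def)
  also have "\<dots> = p * h"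
    using lam by (simp add: field_simps)
  finally show ?thesis .
qed

lemma cleaning_increment_eq:
  assumes h: "0 < h" "h < T - t" and i: "1 \<le> i" and v: "2 * ((1 + lam) * h) < v t i"
  shows "c (t + h) i - c t i = p * h"
proof -
  interpret B: block_lln "\<lambda>n. jumps n t" "\<lambda>n. jumps n (t + h)" r U "(1 + lam) * (t + h - t)"
    using t h by (intro block_lln_between) auto
  have ts: "0 \<le> t" "t \<le> t + h"
    using t h by auto
  have X: "(\<lambda>n. B.freq n (\<lambda>k. cleaning_at lam p (Vn n (k - 1)) (U k) i)) \<longlonglongrightarrow> c (t + h) i - c t i"
    using tendsto_diff[OF X_tendsto(4)[of "t + h" i] X_tendsto(4)[of t i]] t h
    by (simp add: counter_increments(3))
  have "(\<lambda>n. Vn n (jumps n t) i - 2 * B.freq n (\<lambda>_. True)) \<longlonglongrightarrow> v t i - 2 * ((1 + lam) * (t + h - t))"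
    using t by (intro tendsto_diff tendsto_mult_left B.freq_all X_tendsto(1)[unfolded XV_eq]) auto
  with v have "\<forall>\<^sub>F n in sequentially. 0 < Vn n (jumps n t) i - 2 * B.freq n (\<lambda>_. True)"
    by (intro order_tendstoD(1)) auto
  then have "\<forall>\<^sub>F n in sequentially. \<forall>k\<in>{jumps n t<..jumps n (t + h)}.
      cleaning_at lam p (Vn n (k - 1)) (U k) i \<longleftrightarrow> 1 - p / (1 + lam) \<le> U k \<and> U k < 1"
  proof (eventually_elim, intro ballI)
    fix n k assume "0 < Vn n (jumps n t) i - 2 * B.freq n (\<lambda>_. True)" "k \<in> {jumps n t<..jumps n (t + h)}"
    with V_block_dist[OF ts this(2), of i] have "0 < Vn n (k - 1) i"
      by linarith
    with i show "cleaning_at lam p (Vn n (k - 1)) (U k) i \<longleftrightarrow> 1 - p / (1 + lam) \<le> U k \<and> U k < 1"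
      unfolding cleaning_at_def by auto
  qed
  with lam p have "c (t + h) i - c t i = p / (1 + lam) * ((1 + lam) * (t + h - t))"
    by (intro B.tail_freq_eq[OF _ _ _ X]) auto
  also have "\<dots> = p * h"
    using lam by (simp add: field_simps)
  finally show ?thesis .
qed

lemma arrivals_deriv:
  assumes "1 \<le> i" "(\<lambda>s. a s i) differentiable (at t)"
  shows "((\<lambda>s. a s i) has_real_derivative lam * (v t (i - 1) - v t i)) (at t)"
proof -
  from assms(2) have D: "((\<lambda>s. a s i) has_real_derivative deriv (\<lambda>s. a s i) t) (at t)"
    by (simp add: DERIV_deriv_iff_real_differentiable)
  have "deriv (\<lambda>s. a s i) t = lam * (v t (i - 1) - v t i)"
    using t arrivals_increment_bound[OF _ _ assms(1)] by (intro DERIV_eq_of_increment_bound[OF D, of "T - t"]) auto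
  with D show ?thesis
    by simp
qed

lemma departures_deriv:
  assumes "1 \<le> i" "(\<lambda>s. l s i) differentiable (at t)"
  shows "((\<lambda>s. l s i) has_real_derivative (1 - p) * (v t i - v t (i + 1))) (at t)"
proof -
  from assms(2) have D: "((\<lambda>s. l s i) has_real_derivative deriv (\<lambda>s. l s i) t) (at t)"
    by (simp add: DERIV_deriv_iff_real_differentiable)
  have "deriv (\<lambda>s. l s i) t = (1 - p) * (v t i - v t (i + 1))"
    using t departures_increment_bound[OF _ _ assms(1)] by (intro DERIV_eq_of_increment_bound[OF D, of "T - t"]) auto
  with D show ?thesis
    by simp
qed

lemma cleaning_deriv_pos:
  assumes "1 \<le> i" "0 < v t i" "(\<lambda>s. c s i) differentiable (at t)"
  shows "((\<lambda>s. c s i) has_real_derivative p) (at t)"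
proof -
  from assms(3) have D: "((\<lambda>s. c s i) has_real_derivative deriv (\<lambda>s. c s i) t) (at t)"
    by (simp add: DERIV_deriv_iff_real_differentiable)
  define h0 where "h0 = min (T - t) (v t i / (2 * (1 + lam)))"
  have "0 < h0"
    unfolding h0_def using t assms(2) lam by simp
  have "deriv (\<lambda>s. c s i) t = p"
  proof (rule DERIV_eq_of_increment_bound[OF D \<open>0 < h0\<close>, of _ 0])
    fix h :: real assume h: "0 < h" "h < h0"
    then have "2 * ((1 + lam) * h) < v t i"
      using lam unfolding h0_def by (simp add: field_simps)
    with h show "\<bar>c (t + h) i - c t i - p * h\<bar> \<le> 0 * h * h"
      using cleaning_increment_eq[OF h(1) _ assms(1)] unfolding h0_def by simp
  qed
  with D show ?thesis
    by simp
qed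

lemma cleaning_deriv_zero:
  assumes i: "1 \<le> i" and v: "v t i = 0"
    and diff: "(\<lambda>s. a s i) differentiable (at t)" "(\<lambda>s. l s i) differentiable (at t)"
      "(\<lambda>s. c s i) differentiable (at t)"
  shows "((\<lambda>s. c s i) has_real_derivative lam * v t (i - 1)) (at t)" "lam * v t (i - 1) \<le> p"
proof -
  let ?Dc = "deriv (\<lambda>s. c s i) t"
  from diff(3) have Dc: "((\<lambda>s. c s i) has_real_derivative ?Dc) (at t)"
    by (simp add: DERIV_deriv_iff_real_differentiable)
  have "v t (i + 1) = 0"
    using v_profile(1)[of t "i + 1"] v_profile(2)[of t i] v t by simp
  then have "((\<lambda>s. v0 i + a s i - l s i - c s i) has_real_derivative 0 + lam * v t (i - 1) - 0 - ?Dc) (at t)"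
    using arrivals_deriv[OF i diff(1)] departures_deriv[OF i diff(2)] Dc v by (intro derivative_intros) simp_all
  then have "((\<lambda>s. v0 i + a s i - l s i - c s i) has_real_derivative lam * v t (i - 1) - ?Dc) (at t)"
    by simp
  then have Dv: "((\<lambda>s. v s i) has_real_derivative lam * v t (i - 1) - ?Dc) (at t)"
    by (rule has_field_derivative_transform_within_open[of _ _ _ "{0<..<T}"]) (use t v_balance i in auto)
  have "lam * v t (i - 1) - ?Dc = 0"
  proof (rule DERIV_local_min[OF Dv, of "min t (T - t)"])
    show "\<forall>y. \<bar>t - y\<bar> < min t (T - t) \<longrightarrow> v t i \<le> v y i"
    proof (intro allI impI)
      fix y assume "\<bar>t - y\<bar> < min t (T - t)"
      then have "y \<in> {0<..T}"
        by auto
      from v_profile(1)[OF this i] v show "v t i \<le> v y i"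
        by simp
    qed
  qed (use t in simp)
  with Dc show "((\<lambda>s. c s i) has_real_derivative lam * v t (i - 1)) (at t)"
    by simp
  have "?Dc \<le> p"
    using t cleaning_increment_le[OF _ _ i] by (intro DERIV_le_of_increment_bound[OF Dc, of "T - t"]) auto
  with \<open>lam * v t (i - 1) - ?Dc = 0\<close> show "lam * v t (i - 1) \<le> p"
    by simp
qed

lemma cleaning_deriv:
  assumes i: "1 \<le> i"
    and diff: "(\<lambda>s. a s i) differentiable (at t)" "(\<lambda>s. l s i) differentiable (at t)"
      "(\<lambda>s. c s i) differentiable (at t)"
  shows "((\<lambda>s. c s i) has_real_derivative g_fun lam p (v t) i) (at t)"
proof (cases "v t i = 0")
  case True
  moreover have "0 \<le> v t (i - 1)"
    using v_profile(1)[of t "i - 1"] v_0_minus_1[of t] True t i by (cases "i = 1") auto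
  ultimately show ?thesis
    using cleaning_deriv_zero[OF i True diff] by (auto simp: g_fun_def min_def)
next
  case False
  with v_profile(1)[OF _ i, of t] t have "0 < v t i"
    by auto
  then show ?thesis
    using cleaning_deriv_pos[OF i _ diff(3)] by (simp add: g_fun_def)
qed

end

theorem proposition2:
  fixes lam p T :: real
    and W :: "real \<Rightarrow> nat"
    and U :: "nat \<Rightarrow> real"
    and V0 :: "nat \<Rightarrow> nat \<Rightarrow> real"
    and v0 :: "nat \<Rightarrow> real"
    and r :: "nat \<Rightarrow> nat"
    and v a l c :: "real \<Rightarrow> nat \<Rightarrow> real"
    and t :: real
  assumes lam: "0 \<le> lam" "lam < 1"
    and p: "0 \<le> p" "p \<le> 1"
    and T: "T > 0"
    and W_path: "counting_path W"
    and U_range: "\<forall>k\<ge>1. 0 \<le> U k \<and> U k \<le> 1"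
    and V0_space: "\<forall>N\<ge>1. V0 N \<in> Vbar_inf \<and> (\<forall>i. \<exists>m::nat. V0 N i = real m / real N)"
    and C_W: "(\<lambda>N. SUP s\<in>{0..T}. ennreal \<bar>real (W (real N * s)) / real N - (1 + lam) * s\<bar>)
               \<longlonglongrightarrow> 0"
    and C_U: "\<forall>a b. 0 \<le> a \<and> a < b \<and> b \<le> 1 \<longrightarrow>
               (\<lambda>N. real (card {k \<in> {1..N}. a \<le> U k \<and> U k < b}) / real N) \<longlonglongrightarrow> b - a"
    and v0_space: "v0 \<in> Vbar_inf"
    and init: "(\<lambda>N. wnorm (\<lambda>i. V0 N i - v0 i)) \<longlonglongrightarrow> 0"
    and lip: "\<forall>i. (\<exists>K. K-lipschitz_on {0..T} (\<lambda>s. v s i)) \<and> (\<exists>K. K-lipschitz_on {0..T} (\<lambda>s. a s i))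
                 \<and> (\<exists>K. K-lipschitz_on {0..T} (\<lambda>s. l s i)) \<and> (\<exists>K. K-lipschitz_on {0..T} (\<lambda>s. c s i))"
    and subseq: "strict_mono r"
    and limV: "(\<lambda>n. dZ T (XV lam p W U V0 (r n)) v) \<longlonglongrightarrow> 0"
    and limA: "(\<lambda>n. dZ T (XA lam p W U V0 (r n)) a) \<longlonglongrightarrow> 0"
    and limL: "(\<lambda>n. dZ T (XL lam p W U V0 (r n)) l) \<longlonglongrightarrow> 0"
    and limC: "(\<lambda>n. dZ T (XC lam p W U V0 (r n)) c) \<longlonglongrightarrow> 0"
    and t: "t \<in> {0<..<T}"
    and diff: "\<forall>i. (\<lambda>s. v s i) differentiable (at t) \<and> (\<lambda>s. a s i) differentiable (at t)
                 \<and> (\<lambda>s. l s i) differentiable (at t) \<and> (\<lambda>s. c s i) differentiable (at t)"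
  shows "(\<forall>i\<ge>1.
            ((\<lambda>s. a s i) has_real_derivative lam * (v t (i - 1) - v t i)) (at t)
          \<and> ((\<lambda>s. l s i) has_real_derivative (1 - p) * (v t i - v t (i + 1))) (at t)
          \<and> ((\<lambda>s. c s i) has_real_derivative g_fun lam p (v t) i) (at t))
        \<and> v 0 = v0
        \<and> (\<forall>s\<in>{0..T}. v s 0 - v s 1 = 1)"
proof -
  interpret fluid_limit lam p T W U V0 v0 r v a l c t
    using lam(1) p W_path U_range V0_space C_W C_U init subseq limV limA limL limC t
    by unfold_locales
  show ?thesis
    using arrivals_deriv departures_deriv cleaning_deriv diff v_init v_0_minus_1 by blast
qed

end
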